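(* Let $\Omega\subset\mathbb{R}^N$ be an open domain, assume $C_b^\infty(\mathbb{R}^N)\subset\mathcal{X}$, let $g\in\overline{\mathcal{X}}$, and for each $\rho>0$ let $\mathcal{A}_\rho:\Omega\times\mathcal{X}\times\mathbb{R}\to\mathbb{R}$ satisfy assumptions (a), (b), (c) below. Assume the scheme is consistent and weakly stable (as defined in the context), and let $\{u_\rho\}_{\rho>0}$ be the uniformly bounded family of viscosity solutions of the DPP given by weak stability. Then $$\overline{u}(x):=\limsup_{\rho\to0,\,y\to x}u_\rho(y)\quad\text{and}\quad\underline{u}(x):=\liminf_{\rho\to0,\,y\to x}u_\rho(y)$$ are, respectively, an upper semicontinuous viscosity subsolution and a lower semicontinuous viscosity supersolution of the boundary value problem $F(x,u,\nabla u,D^2u)=0$ in $\Omega$, $u=g$ on $\partial\Omega$.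
   Context: $\overline{\mathcal{X}}$ is the set of bounded functions $\mathbb{R}^N\to\mathbb{R}$, $\mathcal{X}\subset\overline{\mathcal{X}}$ a fixed subset. Assumptions on each $\mathcal{A}_\rho$: (a) $\varphi_1\le\varphi_2$ implies $\mathcal{A}_\rho(x,\varphi_2,s)\le\mathcal{A}_\rho(x,\varphi_1,s)$; (b) $s_1\le s_2$ implies $\mathcal{A}_\rho(x,\varphi,s_1)\le\mathcal{A}_\rho(x,\varphi,s_2)$; (c) for each $(x,\varphi)$, $s\mapsto\mathcal{A}_\rho(x,\varphi,s)$ has exactly one zero. DPP: $\mathcal{A}_\rho(x,u,u(x))=0$ for $x\in\Omega$, $u=g$ on $\mathbb{R}^N\setminus\Omega$. A viscosity supersolution of the DPP is $u\in\overline{\mathcal{X}}$ with $u\ge g$ on $\mathbb{R}^N\setminus\Omega$ and, for each $x\in\Omega$, $\mathcal{A}_\rho(x,\varphi,u(x))\ge0$ for all $\varphi\in\mathcal{X}$ with $\varphi\le u$; a viscosity subsolution is $u\in\overline{\mathcal{X}}$ with $u\le g$ on $\mathbb{R}^N\setminus\Omega$ and, for each $x\in\Omega$, $\mathcal{A}_\rho(x,\varphi,u(x))\le0$ for all $\varphi\in\mathcal{X}$ with $\varphi\ge u$; a viscosity solution is both. $\mathcal{B}_\rho(x,\varphi,s):=\mathcal{A}_\rho(x,\varphi,s)$ for $x\in\Omega$ and $:=s-g(x)$ for $x\in\mathbb{R}^N\setminus\Omega$. $F:\Omega\times\mathbb{R}\times\mathbb{R}^N\times S^N\to\mathbb{R}$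 ($S^N$ = symmetric $N\times N$ matrices) is proper (nondecreasing in the second variable) and elliptic ($F(x,s,p,\overline M)\le F(x,s,p,\underline M)$ whenever $\overline M\ge\underline M$). For a function $z$ on a set $C$, $z^*(x)=\limsup_{y\to x,\,y\in C}z(y)$ and $z_*(x)=\liminf_{y\to x,\,y\in C}z(y)$ (for $F$ these envelopes are taken in all variables, defined for $x\in\overline\Omega$). Consistency: for all $x\in\overline\Omega$ and $\varphi\in C_b^\infty(\mathbb{R}^N)$ there is a positive modulus $\omega$ (continuous, strictly increasing $\omega:\mathbb{R}_+\to\mathbb{R}_+$, $\omega(0)=0$) such that $\limsup_{\rho\to0^+,y\to x,\xi\to0}\mathcal{B}_\rho(y,\varphi+\xi,\varphi(y)+\xi+\omega(\rho))\le F^*(x,\varphi(x),\nabla\varphi(x),D^2\varphi(x))$ if $x\in\Omega$, and $\le\max\{\varphi(x)-g_*(x),F^*(x,\varphi(x),\nabla\varphi(x),D^2\varphi(x))\}$ if $x\in\partial\Omega$; and $\liminf_{\rho\to0^+,y\to x,\xi\to0}\mathcal{B}_\rho(y,\varphi+\xi,\varphi(y)+\xi-\omega(\rho))\ge F_*(x,\varphi(x),\nabla\varphi(x),D^2\varphi(x))$ if $x\in\Omega$, and $\ge\min\{\varphi(x)-g^*(x),F_*(x,\varphi(x),\nabla\varphi(x),D^2\varphi(x))\}$ if $x\in\partial\Omega$. Weak stability: for every $\rho>0$ there exists a viscosity solution $u_\rho\in\overline{\mathcal{X}}$ of the DPP, with $\sup_{\mathbb{R}^N}|u_\rho|$ bounded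 independently of $\rho$. Viscosity solutions of the PDE problem: $u\in\overline{\mathcal{X}}$ is a viscosity subsolution if for all $\varphi\in C_b^\infty(\mathbb{R}^N)$ and all $x\in\overline\Omega$ at which $u^*-\varphi$ attains its global maximum (over $\overline\Omega$), $F_*(x,u^*(x),\nabla\varphi(x),D^2\varphi(x))\le0$ when $x\in\Omega$ and $\min\{u^*(x)-g^*(x),F_*(x,u^*(x),\nabla\varphi(x),D^2\varphi(x))\}\le0$ when $x\in\partial\Omega$. It is a viscosity supersolution if for all such $\varphi$ and $x\in\overline\Omega$ at which $u_*-\varphi$ attains its global minimum, $F^*(x,u_*(x),\nabla\varphi(x),D^2\varphi(x))\ge0$ when $x\in\Omega$ and $\max\{u_*(x)-g_*(x),F^*(x,u_*(x),\nabla\varphi(x),D^2\varphi(x))\}\ge0$ when $x\in\partial\Omega$. *)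

theory Defs
  imports "HOL-Analysis.Analysis" "HOL-Library.Liminf_Limsup"
begin

type_synonym 'n pt = "real ^ 'n"
type_synonym 'n mat = "real ^ 'n ^ 'n"

definition partial :: "'n::finite \<Rightarrow> ('n pt \<Rightarrow> real) \<Rightarrow> 'n pt \<Rightarrow> real" where
  "partial i f x = deriv (\<lambda>t. f (x + t *\<^sub>R axis i 1)) 0"

fun ipartial :: "'n::finite list \<Rightarrow> ('n pt \<Rightarrow> real) \<Rightarrow> 'n pt \<Rightarrow> real" where
  "ipartial [] f = f"
| "ipartial (i # is) f = partial i (ipartial is f)"

definition grad :: "('n::finite pt \<Rightarrow> real) \<Rightarrow> 'n pt \<Rightarrow> 'n pt" where
  "grad f x = (\<chi> i. partial i f x)"

definition hess :: "('n::finite pt \<Rightarrow> real) \<Rightarrow> 'n pt \<Rightarrow> 'n mat" where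
  "hess f x = (\<chi> i j. partial i (partial j f) x)"

definition Cb_inf :: "('n::finite pt \<Rightarrow> real) set" where
  "Cb_inf = {f. \<forall>is. (\<forall>x. ipartial is f differentiable (at x))
                     \<and> bounded (range (ipartial is f))}"

definition Xbar :: "('n::finite pt \<Rightarrow> real) set" where
  "Xbar = {u. bounded (range u)}"

definition sym_mats :: "'n::finite mat set" where
  "sym_mats = {M. transpose M = M}"

definition mat_le :: "'n::finite mat \<Rightarrow> 'n mat \<Rightarrow> bool" where
  "mat_le M1 M2 \<longleftrightarrow> (\<forall>v. 0 \<le> v \<bullet> ((M2 - M1) *v v))"

definition usc_env :: "'a::topological_space set \<Rightarrow> ('a \<Rightarrow> real) \<Rightarrow> 'a \<Rightarrow> ereal" where
  "usc_env C z x = Limsup (inf (nhds x) (principal C)) (\<lambda>y. ereal (z y))"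

definition lsc_env :: "'a::topological_space set \<Rightarrow> ('a \<Rightarrow> real) \<Rightarrow> 'a \<Rightarrow> ereal" where
  "lsc_env C z x = Liminf (inf (nhds x) (principal C)) (\<lambda>y. ereal (z y))"

text \<open>Envelopes of a bounded function on R^N (finite, hence real-valued).\<close>
definition ustar :: "('n::finite pt \<Rightarrow> real) \<Rightarrow> 'n pt \<Rightarrow> real" where
  "ustar u x = real_of_ereal (usc_env UNIV u x)"

definition lstar :: "('n::finite pt \<Rightarrow> real) \<Rightarrow> 'n pt \<Rightarrow> real" where
  "lstar u x = real_of_ereal (lsc_env UNIV u x)"

definition Fupper :: "'n::finite pt set \<Rightarrow> ('n pt \<Rightarrow> real \<Rightarrow> 'n pt \<Rightarrow> 'n mat \<Rightarrow> real)
    \<Rightarrow> 'n pt \<Rightarrow> real \<Rightarrow> 'n pt \<Rightarrow> 'n mat \<Rightarrow> ereal" where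
  "Fupper \<Omega> F x s p M =
     usc_env (\<Omega> \<times> UNIV \<times> UNIV \<times> sym_mats) (\<lambda>(y, t, q, P). F y t q P) (x, s, p, M)"

definition Flower :: "'n::finite pt set \<Rightarrow> ('n pt \<Rightarrow> real \<Rightarrow> 'n pt \<Rightarrow> 'n mat \<Rightarrow> real)
    \<Rightarrow> 'n pt \<Rightarrow> real \<Rightarrow> 'n pt \<Rightarrow> 'n mat \<Rightarrow> ereal" where
  "Flower \<Omega> F x s p M =
     lsc_env (\<Omega> \<times> UNIV \<times> UNIV \<times> sym_mats) (\<lambda>(y, t, q, P). F y t q P) (x, s, p, M)"

definition positive_modulus :: "(real \<Rightarrow> real) \<Rightarrow> bool" where
  "positive_modulus \<omega> \<longleftrightarrow> \<omega> 0 = 0 \<and> continuous_on {0..} \<omega> \<and> strict_mono_on {0..} \<omega>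
      \<and> (\<forall>t\<ge>0. 0 \<le> \<omega> t)"

definition upper_semicont :: "('a::topological_space \<Rightarrow> real) \<Rightarrow> bool" where
  "upper_semicont u \<longleftrightarrow> (\<forall>t. open {x. u x < t})"

definition lower_semicont :: "('a::topological_space \<Rightarrow> real) \<Rightarrow> bool" where
  "lower_semicont u \<longleftrightarrow> (\<forall>t. open {x. t < u x})"

definition Bop :: "'n::finite pt set \<Rightarrow> ('n pt \<Rightarrow> real)
    \<Rightarrow> (real \<Rightarrow> 'n pt \<Rightarrow> ('n pt \<Rightarrow> real) \<Rightarrow> real \<Rightarrow> real)
    \<Rightarrow> real \<Rightarrow> 'n pt \<Rightarrow> ('n pt \<Rightarrow> real) \<Rightarrow> real \<Rightarrow> real" where
  "Bop \<Omega> g A \<rho> x \<phi> s = (if x \<in> \<Omega> then A \<rho> x \<phi> s else s - g x)"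

definition dpp_supersol :: "'n::finite pt set \<Rightarrow> ('n pt \<Rightarrow> real) set \<Rightarrow> ('n pt \<Rightarrow> real)
    \<Rightarrow> (real \<Rightarrow> 'n pt \<Rightarrow> ('n pt \<Rightarrow> real) \<Rightarrow> real \<Rightarrow> real) \<Rightarrow> real \<Rightarrow> ('n pt \<Rightarrow> real) \<Rightarrow> bool" where
  "dpp_supersol \<Omega> X g A \<rho> u \<longleftrightarrow> u \<in> Xbar \<and> (\<forall>x. x \<notin> \<Omega> \<longrightarrow> g x \<le> u x) \<and>
     (\<forall>x\<in>\<Omega>. \<forall>\<phi>\<in>X. (\<forall>y. \<phi> y \<le> u y) \<longrightarrow> 0 \<le> A \<rho> x \<phi> (u x))"

definition dpp_subsol :: "'n::finite pt set \<Rightarrow> ('n pt \<Rightarrow> real) set \<Rightarrow> ('n pt \<Rightarrow> real)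
    \<Rightarrow> (real \<Rightarrow> 'n pt \<Rightarrow> ('n pt \<Rightarrow> real) \<Rightarrow> real \<Rightarrow> real) \<Rightarrow> real \<Rightarrow> ('n pt \<Rightarrow> real) \<Rightarrow> bool" where
  "dpp_subsol \<Omega> X g A \<rho> u \<longleftrightarrow> u \<in> Xbar \<and> (\<forall>x. x \<notin> \<Omega> \<longrightarrow> u x \<le> g x) \<and>
     (\<forall>x\<in>\<Omega>. \<forall>\<phi>\<in>X. (\<forall>y. u y \<le> \<phi> y) \<longrightarrow> A \<rho> x \<phi> (u x) \<le> 0)"

definition dpp_sol where
  "dpp_sol \<Omega> X g A \<rho> u \<longleftrightarrow> dpp_supersol \<Omega> X g A \<rho> u \<and> dpp_subsol \<Omega> X g A \<rho> u"

definition consistent :: "'n::finite pt set \<Rightarrow> ('n pt \<Rightarrow> real)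
    \<Rightarrow> (real \<Rightarrow> 'n pt \<Rightarrow> ('n pt \<Rightarrow> real) \<Rightarrow> real \<Rightarrow> real)
    \<Rightarrow> ('n pt \<Rightarrow> real \<Rightarrow> 'n pt \<Rightarrow> 'n mat \<Rightarrow> real) \<Rightarrow> bool" where
  "consistent \<Omega> g A F \<longleftrightarrow>
    (\<forall>x\<in>closure \<Omega>. \<forall>\<phi>\<in>Cb_inf. \<exists>\<omega>. positive_modulus \<omega> \<and>
      (let lim_sup = Limsup (at_right 0 \<times>\<^sub>F nhds x \<times>\<^sub>F nhds 0)
             (\<lambda>(\<rho>, y, \<xi>). ereal (Bop \<Omega> g A \<rho> y (\<lambda>z. \<phi> z + \<xi>) (\<phi> y + \<xi> + \<omega> \<rho>)));
           lim_inf = Liminf (at_right 0 \<times>\<^sub>F nhds x \<times>\<^sub>F nhds 0)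
             (\<lambda>(\<rho>, y, \<xi>). ereal (Bop \<Omega> g A \<rho> y (\<lambda>z. \<phi> z + \<xi>) (\<phi> y + \<xi> - \<omega> \<rho>)));
           Fu = Fupper \<Omega> F x (\<phi> x) (grad \<phi> x) (hess \<phi> x);
           Fl = Flower \<Omega> F x (\<phi> x) (grad \<phi> x) (hess \<phi> x)
       in (x \<in> \<Omega> \<longrightarrow> lim_sup \<le> Fu \<and> Fl \<le> lim_inf) \<and>
          (x \<in> frontier \<Omega> \<longrightarrow>
             lim_sup \<le> max (ereal (\<phi> x - lstar g x)) Fu \<and>
             min (ereal (\<phi> x - ustar g x)) Fl \<le> lim_inf)))"

definition visc_subsol :: "'n::finite pt set \<Rightarrow> ('n pt \<Rightarrow> real)
    \<Rightarrow> ('n pt \<Rightarrow> real \<Rightarrow> 'n pt \<Rightarrow> 'n mat \<Rightarrow> real) \<Rightarrow> ('n pt \<Rightarrow> real) \<Rightarrow> bool" where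
  "visc_subsol \<Omega> g F u \<longleftrightarrow> u \<in> Xbar \<and>
    (\<forall>\<phi>\<in>Cb_inf. \<forall>x\<in>closure \<Omega>.
       (\<forall>y\<in>closure \<Omega>. ustar u y - \<phi> y \<le> ustar u x - \<phi> x) \<longrightarrow>
       (x \<in> \<Omega> \<longrightarrow> Flower \<Omega> F x (ustar u x) (grad \<phi> x) (hess \<phi> x) \<le> 0) \<and>
       (x \<in> frontier \<Omega> \<longrightarrow>
          min (ereal (ustar u x - ustar g x)) (Flower \<Omega> F x (ustar u x) (grad \<phi> x) (hess \<phi> x)) \<le> 0))"

definition visc_supersol :: "'n::finite pt set \<Rightarrow> ('n pt \<Rightarrow> real)
    \<Rightarrow> ('n pt \<Rightarrow> real \<Rightarrow> 'n pt \<Rightarrow> 'n mat \<Rightarrow> real) \<Rightarrow> ('n pt \<Rightarrow> real) \<Rightarrow> bool" where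
  "visc_supersol \<Omega> g F u \<longleftrightarrow> u \<in> Xbar \<and>
    (\<forall>\<phi>\<in>Cb_inf. \<forall>x\<in>closure \<Omega>.
       (\<forall>y\<in>closure \<Omega>. lstar u x - \<phi> x \<le> lstar u y - \<phi> y) \<longrightarrow>
       (x \<in> \<Omega> \<longrightarrow> 0 \<le> Fupper \<Omega> F x (lstar u x) (grad \<phi> x) (hess \<phi> x)) \<and>
       (x \<in> frontier \<Omega> \<longrightarrow>
          0 \<le> max (ereal (lstar u x - lstar g x)) (Fupper \<Omega> F x (lstar u x) (grad \<phi> x) (hess \<phi> x))))"

definition ubar :: "(real \<Rightarrow> 'n::finite pt \<Rightarrow> real) \<Rightarrow> 'n pt \<Rightarrow> real" where
  "ubar u x = real_of_ereal (Limsup (at_right 0 \<times>\<^sub>F nhds x) (\<lambda>(\<rho>, y). ereal (u \<rho> y)))"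

definition ulow :: "(real \<Rightarrow> 'n::finite pt \<Rightarrow> real) \<Rightarrow> 'n pt \<Rightarrow> real" where
  "ulow u x = real_of_ereal (Liminf (at_right 0 \<times>\<^sub>F nhds x) (\<lambda>(\<rho>, y). ereal (u \<rho> y)))"

end

theory Submission
  imports Defs
begin

(* Barles-Souganidis argument. Let \<phi> touch ubar u from above at x0 relative to the closure
  of \<Omega>. Near x0 the boundary data g then lie below the test function too: either x0 is
  interior, or the boundary alternative min {ubar - g^*, F_*} \<le> 0 holds trivially. Adding
  K \<Sum>j tanh^4 (z_j - x0_j) makes the contact strict without changing gradient and Hessian at
  x0. Since the half-relaxed limsup is approached uniformly on a compact ball, for small \<rho> the
  supremum \<xi> of u_\<rho> - \<psi> is close to 0 and attained up to \<omega>(\<rho>) at points y near x0; as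
  \<psi> + \<xi> \<ge> u_\<rho>, the DPP and monotonicity in s give B_\<rho>(y, \<psi> + \<xi>, \<psi>(y) + \<xi> - \<omega>(\<rho>)) \<le> 0,
  and consistency yields F_* \<le> 0. The supersolution case is symmetric (ulow u = - ubar (- u)). *)

section \<open>Smooth bump functions\<close>

(* Closed under partial derivatives, so every member is smooth with all derivatives bounded. *)
inductive_set tanh_polys :: "('n::finite pt \<Rightarrow> real) set" where
  const: "(\<lambda>z. c) \<in> tanh_polys"
| tanh_coord: "(\<lambda>z. tanh (z$j - a)) \<in> tanh_polys"
| add: "f \<in> tanh_polys \<Longrightarrow> g \<in> tanh_polys \<Longrightarrow> (\<lambda>z. f z + g z) \<in> tanh_polys"
| mult: "f \<in> tanh_polys \<Longrightarrow> g \<in> tanh_polys \<Longrightarrow> (\<lambda>z. f z * g z) \<in> tanh_polys"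

lemma tanh_polys_sum:
  "finite S \<Longrightarrow> (\<And>j. j \<in> S \<Longrightarrow> f j \<in> tanh_polys) \<Longrightarrow> (\<lambda>z. \<Sum>j\<in>S. f j z) \<in> tanh_polys"
  by (induction S rule: finite_induct) (auto intro: tanh_polys.intros)

lemma tanh_polys_bounded: "f \<in> tanh_polys \<Longrightarrow> \<exists>B. \<forall>z. \<bar>f z\<bar> \<le> B"
proof (induction rule: tanh_polys.induct)
  case (tanh_coord j a)
  have "\<bar>tanh t\<bar> \<le> 1" for t :: real
    using tanh_real_bounds[of t] by (simp add: abs_le_iff less_imp_le)
  then show ?case by blast
next
  case (add f g)
  then obtain B1 B2 where "\<forall>z. \<bar>f z\<bar> \<le> B1" "\<forall>z. \<bar>g z\<bar> \<le> B2" by blast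
  then show ?case by (intro exI[of _ "B1 + B2"]) (metis abs_triangle_ineq add_mono order_trans)
next
  case (mult f g)
  then obtain B1 B2 where "\<forall>z. \<bar>f z\<bar> \<le> B1" "\<forall>z. \<bar>g z\<bar> \<le> B2" by blast
  then show ?case by (intro exI[of _ "B1 * B2"]) (simp add: abs_mult mult_mono')
qed auto

lemma has_derivative_coord:
  fixes z :: "'n::finite pt"
  assumes "(q has_real_derivative d) (at (z$j - a))"
  shows "((\<lambda>z. q (z$j - a)) has_derivative (\<lambda>h. d * h$j)) (at z)"
proof -
  have "((\<lambda>z::'n pt. z$j - a) has_derivative (\<lambda>h. h$j)) (at z)"
    by (auto intro!: derivative_eq_intros bounded_linear_imp_has_derivative)
  from diff_chain_at[OF this assms[unfolded has_field_derivative_def]]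
  show ?thesis by (simp add: comp_def mult.commute)
qed

lemma has_derivative_tanh_coord:
  "((\<lambda>z::'n::finite pt. tanh (z$j - a)) has_derivative (\<lambda>h. (1 - tanh (z$j - a)^2) * h$j)) (at z)"
proof -
  have "cosh (z$j - a) \<noteq> 0" using cosh_real_pos[of "z$j - a"] by simp
  then have "((\<lambda>t. tanh t) has_real_derivative (1 - tanh (z$j - a)^2) * 1) (at (z$j - a))"
    by (intro has_field_derivative_tanh DERIV_ident)
  from has_derivative_coord[OF this] show ?thesis by simp
qed

definition has_tanh_poly_partials :: "('n::finite pt \<Rightarrow> real) \<Rightarrow> ('n \<Rightarrow> 'n pt \<Rightarrow> real) \<Rightarrow> bool" where
  "has_tanh_poly_partials f D \<longleftrightarrow>
     (\<forall>i. D i \<in> tanh_polys) \<and> (\<forall>z. (f has_derivative (\<lambda>h. \<Sum>k\<in>UNIV. h$k * D k z)) (at z))"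

lemma has_tanh_poly_partials_add:
  assumes "has_tanh_poly_partials f Df" "has_tanh_poly_partials g Dg"
  shows "has_tanh_poly_partials (\<lambda>z. f z + g z) (\<lambda>i z. Df i z + Dg i z)"
  unfolding has_tanh_poly_partials_def
proof (intro conjI allI)
  fix z
  have "((\<lambda>z. f z + g z) has_derivative
          (\<lambda>h. (\<Sum>k\<in>UNIV. h$k * Df k z) + (\<Sum>k\<in>UNIV. h$k * Dg k z))) (at z)"
    using assms unfolding has_tanh_poly_partials_def by (intro has_derivative_add) auto
  then show "((\<lambda>z. f z + g z) has_derivative (\<lambda>h. \<Sum>k\<in>UNIV. h$k * (Df k z + Dg k z))) (at z)"
    by (simp add: distrib_left sum.distrib)
qed (use assms in \<open>auto simp: has_tanh_poly_partials_def intro: tanh_polys.add\<close>)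

lemma has_tanh_poly_partials_mult:
  assumes "has_tanh_poly_partials f Df" "has_tanh_poly_partials g Dg" "f \<in> tanh_polys" "g \<in> tanh_polys"
  shows "has_tanh_poly_partials (\<lambda>z. f z * g z) (\<lambda>i z. f z * Dg i z + Df i z * g z)"
  unfolding has_tanh_poly_partials_def
proof (intro conjI allI)
  fix z
  have "((\<lambda>z. f z * g z) has_derivative
          (\<lambda>h. f z * (\<Sum>k\<in>UNIV. h$k * Dg k z) + (\<Sum>k\<in>UNIV. h$k * Df k z) * g z)) (at z)"
    using assms unfolding has_tanh_poly_partials_def by (intro has_derivative_mult) auto
  then show "((\<lambda>z. f z * g z) has_derivative
               (\<lambda>h. \<Sum>k\<in>UNIV. h$k * (f z * Dg k z + Df k z * g z))) (at z)"
    by (simp add: distrib_left sum.distrib sum_distrib_left sum_distrib_right algebra_simps)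
next
  fix i
  show "(\<lambda>z. f z * Dg i z + Df i z * g z) \<in> tanh_polys"
    using assms unfolding has_tanh_poly_partials_def by (intro tanh_polys.add tanh_polys.mult) auto
qed

lemma tanh_polys_has_partials: "f \<in> tanh_polys \<Longrightarrow> \<exists>D. has_tanh_poly_partials f D"
proof (induction rule: tanh_polys.induct)
  case (const c)
  show ?case unfolding has_tanh_poly_partials_def
    by (rule exI[of _ "\<lambda>i z. 0"]) (auto intro: tanh_polys.const)
next
  case (tanh_coord j a)
  define D where "D i z = (if i = j then 1 + (-1) * (tanh (z$j - a) * tanh (z$j - a)) else 0)"
    for i and z :: "'a pt"
  have "(\<lambda>z. 1 + (-1) * (tanh (z$j - a) * tanh (z$j - a))) \<in> tanh_polys"
    by (intro tanh_polys.intros)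
  then have "D i \<in> tanh_polys" for i
    unfolding D_def by (cases "i = j") (auto intro: tanh_polys.const)
  moreover have "((\<lambda>z. tanh (z$j - a)) has_derivative (\<lambda>h. \<Sum>k\<in>UNIV. h$k * D k z)) (at z)" for z
    using has_derivative_tanh_coord[of j a z]
    by (simp add: D_def power2_eq_square mult.commute if_distrib[of "\<lambda>x. _ * x"] cong: if_cong)
  ultimately show ?case unfolding has_tanh_poly_partials_def by blast
qed (use has_tanh_poly_partials_add has_tanh_poly_partials_mult in blast)+

lemma partial_has_derivative:
  assumes "(f has_derivative f') (at x)"
  shows "partial i f x = f' (axis i 1)"
proof -
  have "((\<lambda>t::real. x + t *\<^sub>R axis i 1) has_derivative (\<lambda>t. t *\<^sub>R axis i 1)) (at 0)"
    by (auto intro!: derivative_eq_intros)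
  from diff_chain_at[OF this] assms
  have "((\<lambda>t. f (x + t *\<^sub>R axis i 1)) has_derivative (\<lambda>t. f' (t *\<^sub>R axis i 1))) (at 0)"
    by (simp add: comp_def)
  moreover have "f' (t *\<^sub>R axis i 1) = f' (axis i 1) * t" for t
    using linear_scale[OF has_derivative_linear[OF assms]] by simp
  ultimately have "((\<lambda>t. f (x + t *\<^sub>R axis i 1)) has_field_derivative f' (axis i 1)) (at 0)"
    by (simp add: has_field_derivative_def)
  then show ?thesis unfolding partial_def by (rule DERIV_imp_deriv)
qed

lemma partial_add:
  assumes "f differentiable (at x)" "g differentiable (at x)"
  shows "partial i (\<lambda>z. f z + g z) x = partial i f x + partial i g x"
proof -
  obtain f' g' where f: "(f has_derivative f') (at x)" and g: "(g has_derivative g') (at x)"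
    using assms unfolding differentiable_def by blast
  show ?thesis
    using partial_has_derivative[OF has_derivative_add[OF f g]]
      partial_has_derivative[OF f] partial_has_derivative[OF g] by simp
qed

lemma tanh_polys_differentiable: "b \<in> tanh_polys \<Longrightarrow> b differentiable (at z)"
  using tanh_polys_has_partials unfolding has_tanh_poly_partials_def differentiable_def by blast

lemma tanh_polys_partial: "b \<in> tanh_polys \<Longrightarrow> partial i b \<in> tanh_polys"
proof -
  assume "b \<in> tanh_polys"
  then obtain D where D: "\<forall>i. D i \<in> tanh_polys"
    "\<forall>z. (b has_derivative (\<lambda>h. \<Sum>k\<in>UNIV. h$k * D k z)) (at z)"
    using tanh_polys_has_partials unfolding has_tanh_poly_partials_def by blast
  have "partial i b z = D i z" for z
    using partial_has_derivative[OF D(2)[rule_format, of z], of i]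
    by (simp add: axis_def if_distrib[of "\<lambda>x. x * _"] cong: if_cong)
  then show ?thesis using D(1) by (metis ext)
qed

lemma tanh_polys_ipartial: "b \<in> tanh_polys \<Longrightarrow> ipartial is b \<in> tanh_polys"
  by (induction "is") (auto intro: tanh_polys_partial)

lemma ipartial_add_tanh_poly:
  assumes "\<phi> \<in> Cb_inf" "b \<in> tanh_polys"
  shows "ipartial is (\<lambda>z. \<phi> z + b z) = (\<lambda>z. ipartial is \<phi> z + ipartial is b z)"
proof (induction "is")
  case (Cons i "is")
  have "ipartial is \<phi> differentiable (at z)" "ipartial is b differentiable (at z)" for z
    using assms tanh_polys_differentiable[OF tanh_polys_ipartial] unfolding Cb_inf_def by auto
  then show ?case using Cons by (auto intro: partial_add)
qed simp

lemma Cb_inf_add_tanh_poly: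
  assumes "\<phi> \<in> Cb_inf" "b \<in> tanh_polys"
  shows "(\<lambda>z. \<phi> z + b z) \<in> Cb_inf"
  unfolding Cb_inf_def
proof (intro CollectI allI conjI)
  fix "is" :: "'a list" and x
  show "ipartial is (\<lambda>z. \<phi> z + b z) differentiable (at x)"
    unfolding ipartial_add_tanh_poly[OF assms] using assms(1) unfolding Cb_inf_def
    by (intro differentiable_add tanh_polys_differentiable[OF tanh_polys_ipartial[OF assms(2)]]) auto
  have "bounded (range (ipartial is \<phi>))" using assms(1) unfolding Cb_inf_def by blast
  then obtain B' where "\<forall>z. \<bar>ipartial is \<phi> z\<bar> \<le> B'"
    unfolding bounded_iff by auto
  moreover obtain B where "\<forall>z. \<bar>ipartial is b z\<bar> \<le> B"
    using tanh_polys_bounded[OF tanh_polys_ipartial[OF assms(2)]] by blast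
  ultimately show "bounded (range (ipartial is (\<lambda>z. \<phi> z + b z)))"
    unfolding ipartial_add_tanh_poly[OF assms] bounded_iff
    by (intro exI[of _ "B' + B"]) (auto intro: order_trans[OF abs_triangle_ineq] add_mono)
qed

lemma Cb_inf_differentiable_bounded:
  "\<phi> \<in> Cb_inf \<Longrightarrow> (\<forall>x. \<phi> differentiable (at x)) \<and> bounded (range \<phi>)"
  unfolding Cb_inf_def by (drule CollectD, drule spec[of _ "[]"]) simp

lemma Cb_inf_isCont: "\<phi> \<in> Cb_inf \<Longrightarrow> isCont \<phi> x"
  using Cb_inf_differentiable_bounded differentiable_imp_continuous_within by blast

(* The fourth power makes gradient and Hessian vanish at the centre x0. *)
definition bump :: "real \<Rightarrow> 'n::finite pt \<Rightarrow> 'n pt \<Rightarrow> real" where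
  "bump K x0 z = K * (\<Sum>j\<in>UNIV. tanh (z$j - x0$j) ^ 4)"

definition dtanh4 :: "real \<Rightarrow> real" where
  "dtanh4 t = 4 * tanh t ^ 3 * (1 - tanh t ^ 2)"

lemma has_real_derivative_tanh4: "((\<lambda>t. tanh t ^ 4) has_real_derivative dtanh4 t) (at t)"
proof -
  have "cosh t \<noteq> 0" using cosh_real_pos[of t] by simp
  then show ?thesis unfolding dtanh4_def
    by (auto intro!: derivative_eq_intros simp: algebra_simps)
qed

lemma has_real_derivative_dtanh4_0: "(dtanh4 has_real_derivative 0) (at 0)"
  unfolding dtanh4_def[abs_def] by (auto intro!: derivative_eq_intros)

lemma bump_tanh_poly: "(\<lambda>z. c + bump K x0 z) \<in> tanh_polys"
proof -
  have "(\<lambda>z. tanh (z$j - x0$j) * tanh (z$j - x0$j) * tanh (z$j - x0$j) * tanh (z$j - x0$j))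
          \<in> tanh_polys" for j
    by (intro tanh_polys.intros)
  then have "(\<lambda>z. \<Sum>j\<in>UNIV. tanh (z$j - x0$j) ^ 4) \<in> tanh_polys"
    using tanh_polys_sum[of UNIV "\<lambda>j z. tanh (z$j - x0$j) ^ 4"]
    by (simp add: power4_eq_xxxx mult.assoc)
  then show ?thesis unfolding bump_def by (intro tanh_polys.intros)
qed

lemma bump_center: "bump K x0 x0 = 0"
  by (simp add: bump_def)

lemma bump_nonneg: "0 \<le> K \<Longrightarrow> 0 \<le> bump K x0 z"
  unfolding bump_def by (intro mult_nonneg_nonneg sum_nonneg) (auto simp: zero_le_even_power)

lemma isCont_bump: "isCont (bump K x0) z"
  unfolding bump_def[abs_def] by (intro continuous_intros) (metis cosh_real_pos less_irrefl)

lemma bump_ge_far: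
  fixes x0 z :: "'n::finite pt"
  assumes "0 \<le> K" "0 < s" "s \<le> dist x0 z"
  shows "K * tanh (s / CARD('n)) ^ 4 \<le> bump K x0 z"
proof -
  obtain i where i: "s / CARD('n) \<le> \<bar>z$i - x0$i\<bar>"
  proof (rule ccontr)
    assume "\<not> thesis"
    with that have "\<not> s / CARD('n) \<le> \<bar>z$i - x0$i\<bar>" for i by blast
    then have "\<bar>(z - x0)$i\<bar> < s / CARD('n)" for i by (simp add: not_le)
    then have "(\<Sum>i\<in>UNIV. \<bar>(z - x0)$i\<bar>) < (\<Sum>i\<in>(UNIV::'n set). s / CARD('n))"
      by (intro sum_strict_mono) auto
    moreover have "dist x0 z \<le> (\<Sum>i\<in>UNIV. \<bar>(z - x0)$i\<bar>)"
      using norm_le_l1_cart[of "z - x0"] by (simp add: dist_norm norm_minus_commute)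
    ultimately show False using assms(3) by simp
  qed
  have "tanh (s / CARD('n)) ^ 4 \<le> tanh \<bar>z$i - x0$i\<bar> ^ 4"
    using i assms(2) by (intro power_mono) (auto simp del: tanh_real_abs)
  also have "\<dots> = tanh (z$i - x0$i) ^ 4"
    by simp
  also have "\<dots> \<le> (\<Sum>j\<in>UNIV. tanh (z$j - x0$j) ^ 4)"
    by (rule member_le_sum) (auto simp: zero_le_even_power)
  finally show ?thesis unfolding bump_def using assms(1) by (simp add: mult_left_mono)
qed

lemma partial_bump: "partial i (\<lambda>z. c + bump K x0 z) z = K * dtanh4 (z$i - x0$i)"
proof -
  have "((\<lambda>z. tanh (z$j - x0$j) ^ 4) has_derivative (\<lambda>h. dtanh4 (z$j - x0$j) * h$j)) (at z)" for j
    using has_derivative_coord[OF has_real_derivative_tanh4] .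
  then have "((\<lambda>z. c + bump K x0 z) has_derivative
               (\<lambda>h. 0 + K * (\<Sum>j\<in>UNIV. dtanh4 (z$j - x0$j) * h$j))) (at z)"
    unfolding bump_def
    by (intro has_derivative_add has_derivative_const has_derivative_mult_right has_derivative_sum)
  from partial_has_derivative[OF this] show ?thesis
    by (simp add: axis_def if_distrib[of "\<lambda>x. _ * x"] cong: if_cong)
qed

lemma grad_bump_center: "grad (\<lambda>z. c + bump K x0 z) x0 = 0"
  by (simp add: grad_def partial_bump dtanh4_def vec_eq_iff)

lemma hess_bump_center: "hess (\<lambda>z. c + bump K x0 z) x0 = 0"
proof -
  have "partial i (\<lambda>z. K * dtanh4 (z$j - x0$j)) x0 = 0" for i j
  proof -
    have "((\<lambda>z. K * dtanh4 (z$j - x0$j)) has_derivative (\<lambda>h. K * (0 * h$j))) (at x0)"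
      using has_real_derivative_dtanh4_0
      by (intro has_derivative_mult_right has_derivative_coord) simp
    from partial_has_derivative[OF this] show ?thesis by simp
  qed
  moreover have "partial j (\<lambda>z. c + bump K x0 z) = (\<lambda>z. K * dtanh4 (z$j - x0$j))" for j
    using partial_bump by blast
  ultimately show ?thesis by (simp add: hess_def vec_eq_iff)
qed

lemma bump_perturbation:
  fixes \<phi> :: "'n::finite pt \<Rightarrow> real" and c K :: real and x0 :: "'n pt"
  assumes "\<phi> \<in> Cb_inf"
  defines "\<psi> \<equiv> \<lambda>z. \<phi> z + (c + bump K x0 z)"
  shows "\<psi> \<in> Cb_inf" and "grad \<psi> x0 = grad \<phi> x0" and "hess \<psi> x0 = hess \<phi> x0"
proof -
  note add = ipartial_add_tanh_poly[OF assms(1) bump_tanh_poly]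
  show "\<psi> \<in> Cb_inf" unfolding \<psi>_def by (rule Cb_inf_add_tanh_poly[OF assms(1) bump_tanh_poly])
  have "grad \<psi> x0 = grad \<phi> x0 + grad (\<lambda>z. c + bump K x0 z) x0"
    using add[of "[_]"] by (simp add: \<psi>_def grad_def vec_eq_iff)
  then show "grad \<psi> x0 = grad \<phi> x0" by (simp add: grad_bump_center)
  have "hess \<psi> x0 = hess \<phi> x0 + hess (\<lambda>z. c + bump K x0 z) x0"
    using add[of "[_, _]"] by (simp add: \<psi>_def hess_def vec_eq_iff)
  then show "hess \<psi> x0 = hess \<phi> x0" by (simp add: hess_bump_center)
qed

lemma bump_penalty:
  fixes x0 :: "'n::finite pt"
  assumes "0 < R"
  obtains K where "0 < K"
    and "\<And>r. 0 < r \<Longrightarrow> \<exists>m>0. \<forall>z. r \<le> dist x0 z \<longrightarrow> m \<le> bump K x0 z"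
    and "\<And>z. R < dist x0 z \<Longrightarrow> B + 1 \<le> bump K x0 z"
proof -
  have pos: "0 < tanh (s / CARD('n)) ^ 4" if "0 < s" for s
    using that by simp
  define K where "K = (\<bar>B\<bar> + 1) / tanh (R / CARD('n)) ^ 4"
  have K: "0 < K" "K * tanh (R / CARD('n)) ^ 4 = \<bar>B\<bar> + 1"
    using pos[OF assms] by (auto simp: K_def)
  show thesis
  proof (rule that[OF K(1)])
    fix r :: real assume "0 < r"
    then show "\<exists>m>0. \<forall>z. r \<le> dist x0 z \<longrightarrow> m \<le> bump K x0 z"
      using K(1) pos[OF \<open>0 < r\<close>] bump_ge_far[of K r x0]
      by (intro exI[of _ "K * tanh (r / CARD('n)) ^ 4"]) auto
  next
    fix z assume "R < dist x0 z"
    then have "K * tanh (R / CARD('n)) ^ 4 \<le> bump K x0 z"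
      using K(1) assms by (intro bump_ge_far) auto
    with K(2) show "B + 1 \<le> bump K x0 z" by linarith
  qed
qed

section \<open>Filters and near maximizers\<close>

lemma Liminf_le_if_frequently:
  fixes f :: "_ \<Rightarrow> 'b::complete_linorder"
  assumes "frequently (\<lambda>x. f x \<le> c) F"
  shows "Liminf F f \<le> c"
proof (rule ccontr)
  assume "\<not> Liminf F f \<le> c"
  then have "eventually (\<lambda>x. c < f x) F" by (intro less_LiminfD) simp
  from frequently_eventually_frequently[OF assms this] show False
    by (auto dest: frequently_ex)
qed

lemma Limsup_ge_if_frequently:
  fixes f :: "_ \<Rightarrow> 'b::complete_linorder"
  assumes "frequently (\<lambda>x. c \<le> f x) F"
  shows "c \<le> Limsup F f"
proof (rule ccontr)
  assume "\<not> c \<le> Limsup F f"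
  then have "eventually (\<lambda>x. f x < c) F" by (intro Limsup_lessD) simp
  from frequently_eventually_frequently[OF assms this] show False
    by (auto dest: frequently_ex)
qed

lemma frequently_at_right_prod_nhdsI:
  fixes x :: "'a::metric_space"
  assumes "\<And>\<delta>. 0 < \<delta> \<Longrightarrow> \<exists>\<rho> y \<xi>. 0 < \<rho> \<and> \<rho> < \<delta> \<and> dist y x < \<delta> \<and> \<bar>\<xi>\<bar> < \<delta> \<and> P (\<rho>, y, \<xi>)"
  shows "frequently P (at_right 0 \<times>\<^sub>F nhds x \<times>\<^sub>F nhds (0::real))"
  unfolding frequently_def
proof
  assume "eventually (\<lambda>p. \<not> P p) (at_right 0 \<times>\<^sub>F nhds x \<times>\<^sub>F nhds 0)"
  then obtain Pr Pyx where "eventually Pr (at_right 0)" "eventually Pyx (nhds x \<times>\<^sub>F nhds 0)"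
    and notP_rx: "\<And>\<rho> p. Pr \<rho> \<Longrightarrow> Pyx p \<Longrightarrow> \<not> P (\<rho>, p)"
    unfolding eventually_prod_filter[of _ "at_right 0"] by auto
  moreover from this(2) obtain Py P\<xi> where "eventually Py (nhds x)" "eventually P\<xi> (nhds 0)"
    and Pyx: "\<And>y \<xi>. Py y \<Longrightarrow> P\<xi> \<xi> \<Longrightarrow> Pyx (y, \<xi>)"
    unfolding eventually_prod_filter by auto
  ultimately obtain d1 d2 d3 where d: "0 < d1" "0 < d2" "0 < d3"
    and "\<And>\<rho>. 0 < \<rho> \<Longrightarrow> \<rho> < d1 \<Longrightarrow> Pr \<rho>"
    and "\<And>y. dist y x < d2 \<Longrightarrow> Py y" and "\<And>\<xi>. dist \<xi> 0 < d3 \<Longrightarrow> P\<xi> \<xi>"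
    unfolding eventually_at_right_field eventually_nhds_metric by metis
  with notP_rx Pyx have "\<not> P (\<rho>, y, \<xi>)"
    if "0 < \<rho>" "\<rho> < min d1 (min d2 d3)" "dist y x < min d1 (min d2 d3)" "\<bar>\<xi>\<bar> < min d1 (min d2 d3)"
    for \<rho> y \<xi>
    using that by simp
  then show False using assms[of "min d1 (min d2 d3)"] d by auto
qed

lemma eventually_ball_compact:
  assumes "compact S" and "\<And>z. z \<in> S \<Longrightarrow> eventually (\<lambda>(\<rho>, y). P \<rho> y) (F \<times>\<^sub>F nhds z)"
  shows "eventually (\<lambda>\<rho>. \<forall>y\<in>S. P \<rho> y) F"
proof -
  let ?T = "{U. open U \<and> eventually (\<lambda>\<rho>. \<forall>y\<in>U. P \<rho> y) F}"
  have "\<exists>U\<in>?T. z \<in> U" if "z \<in> S" for z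
  proof -
    from assms(2)[OF that] obtain Pf Pg where "eventually Pf F" "eventually Pg (nhds z)"
      and P: "\<And>\<rho> y. Pf \<rho> \<Longrightarrow> Pg y \<Longrightarrow> P \<rho> y"
      unfolding eventually_prod_filter by auto
    moreover from this(2) obtain U where "open U" "z \<in> U" "\<And>y. y \<in> U \<Longrightarrow> Pg y"
      unfolding eventually_nhds by auto
    ultimately have "eventually (\<lambda>\<rho>. \<forall>y\<in>U. P \<rho> y) F"
      by (auto elim: eventually_mono)
    with \<open>open U\<close> \<open>z \<in> U\<close> show ?thesis by blast
  qed
  then obtain T where "T \<subseteq> ?T" "finite T" "S \<subseteq> \<Union>T"
    using compactE[OF assms(1), of ?T] by (metis (no_types, lifting) UnionI mem_Collect_eq subsetI)
  then have "eventually (\<lambda>\<rho>. \<forall>U\<in>T. \<forall>y\<in>U. P \<rho> y) F"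
    by (intro eventually_ball_finite) auto
  then show ?thesis by (rule eventually_mono) (use \<open>S \<subseteq> \<Union>T\<close> in blast)
qed

lemma positive_modulus_pos: "positive_modulus \<omega> \<Longrightarrow> 0 < \<rho> \<Longrightarrow> 0 < \<omega> \<rho>"
  unfolding positive_modulus_def strict_mono_on_def
  by (metis atLeast_iff order_refl order_less_imp_le)

lemma tendsto_positive_modulus:
  assumes "positive_modulus \<omega>"
  shows "(\<omega> \<longlongrightarrow> 0) (at_right 0)"
proof -
  have "(\<omega> \<longlongrightarrow> 0) (at 0 within {0..})"
    using assms unfolding positive_modulus_def continuous_on_def by (metis atLeast_iff order_refl)
  then show ?thesis by (rule tendsto_within_subset) auto
qed

lemma near_maximizer_of_strict_max:
  fixes W :: "'a::metric_space \<Rightarrow> real"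
  assumes le: "\<And>w. W w \<le> \<epsilon>" and z: "- \<epsilon> < W z"
    and far: "\<And>w. \<delta> \<le> dist w a \<Longrightarrow> W w < - 2 * \<epsilon>"
    and \<eta>: "0 < \<eta>" "\<eta> \<le> \<epsilon>"
  shows "\<exists>y \<xi>. dist y a < \<delta> \<and> \<bar>\<xi>\<bar> \<le> \<epsilon> \<and> (\<forall>w. W w \<le> \<xi>) \<and> \<xi> - \<eta> \<le> W y"
proof -
  define \<xi> where "\<xi> = (SUP w. W w)"
  have bdd: "bdd_above (range W)"
    using le by (intro bdd_aboveI2) auto
  have W_le: "W w \<le> \<xi>" for w
    unfolding \<xi>_def by (rule cSUP_upper[OF _ bdd]) simp
  have "\<xi> \<le> \<epsilon>"
    unfolding \<xi>_def using le by (intro cSUP_least) auto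
  then have \<xi>: "\<bar>\<xi>\<bar> \<le> \<epsilon>"
    using W_le[of z] z by linarith
  obtain y where y: "\<xi> - \<eta> < W y"
    using less_cSUP_iff[OF _ bdd, of "\<xi> - \<eta>"] \<eta>(1) unfolding \<xi>_def by auto
  have "dist y a < \<delta>"
  proof (rule ccontr)
    assume "\<not> dist y a < \<delta>"
    then have "W y < - 2 * \<epsilon>" using far by simp
    with y \<xi> \<eta>(2) show False by linarith
  qed
  with \<xi> W_le y show ?thesis by (intro exI[of _ y] exI[of _ \<xi>]) auto
qed

lemma penalized_near_maximizers:
  fixes v :: "real \<Rightarrow> 'a::metric_space \<Rightarrow> real" and p :: "'a \<Rightarrow> real"
  assumes v_le: "\<And>\<rho> z. 0 < \<rho> \<Longrightarrow> v \<rho> z \<le> B"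
    and v_below: "\<And>\<epsilon>. 0 < \<epsilon> \<Longrightarrow> eventually (\<lambda>\<rho>. \<forall>z\<in>cball x0 R. v \<rho> z < \<epsilon>) (at_right 0)"
    and v_touch: "\<And>\<epsilon>. 0 < \<epsilon> \<Longrightarrow> frequently (\<lambda>(\<rho>, y). - \<epsilon> < v \<rho> y) (at_right 0 \<times>\<^sub>F nhds x0)"
    and p_nonneg: "\<And>z. 0 \<le> p z" and p_center: "p x0 = 0" and p_cont: "isCont p x0"
    and p_sep: "\<And>r. 0 < r \<Longrightarrow> \<exists>m>0. \<forall>z. r \<le> dist x0 z \<longrightarrow> m \<le> p z"
    and p_far: "\<And>z. R < dist x0 z \<Longrightarrow> B + 1 \<le> p z"
    and \<omega>_pos: "\<And>\<rho>. 0 < \<rho> \<Longrightarrow> 0 < \<omega> \<rho>" and \<omega>_lim: "(\<omega> \<longlongrightarrow> 0) (at_right 0)"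
    and "0 < \<delta>"
  shows "\<exists>\<rho> y \<xi>. 0 < \<rho> \<and> \<rho> < \<delta> \<and> dist y x0 < \<delta> \<and> \<bar>\<xi>\<bar> < \<delta> \<and>
           (\<forall>z. v \<rho> z - p z \<le> \<xi>) \<and> \<xi> - \<omega> \<rho> \<le> v \<rho> y - p y"
proof -
  obtain m where m: "0 < m" "\<And>z. \<delta> \<le> dist x0 z \<Longrightarrow> m \<le> p z"
    using p_sep[OF \<open>0 < \<delta>\<close>] by blast
  define \<epsilon> where "\<epsilon> = min \<delta> (min m 1) / 4"
  have \<epsilon>: "0 < \<epsilon>" "4 * \<epsilon> \<le> \<delta>" "4 * \<epsilon> \<le> m" "4 * \<epsilon> \<le> 1"
    using \<open>0 < \<delta>\<close> m(1) by (auto simp: \<epsilon>_def)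
  define good where "good \<rho> \<longleftrightarrow> \<rho> \<in> {0<..<\<delta>} \<and> \<omega> \<rho> < \<epsilon> \<and> (\<forall>z\<in>cball x0 R. v \<rho> z < \<epsilon>)" for \<rho>
  have "eventually good (at_right 0)"
    unfolding good_def using eventually_at_right_real[OF \<open>0 < \<delta>\<close>]
      order_tendstoD(2)[OF \<omega>_lim \<epsilon>(1)] v_below[OF \<epsilon>(1)] by eventually_elim blast
  moreover have "(p \<longlongrightarrow> 0) (nhds x0)"
    using p_cont p_center unfolding isCont_def tendsto_at_iff_tendsto_nhds by simp
  then have "eventually (\<lambda>y. p y < \<epsilon> / 2) (nhds x0)"
    by (rule order_tendstoD(2)) (use \<epsilon>(1) in simp)
  ultimately have "eventually (\<lambda>q. good (fst q) \<and> p (snd q) < \<epsilon> / 2) (at_right 0 \<times>\<^sub>F nhds x0)"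
    by (rule eventually_prodI)
  from frequently_ex[OF frequently_eventually_frequently[OF v_touch[of "\<epsilon> / 2"] this]] \<epsilon>(1)
  obtain \<rho> z where good: "good \<rho>" and "- (\<epsilon> / 2) < v \<rho> z" "p z < \<epsilon> / 2"
    by auto
  then have z: "- \<epsilon> < v \<rho> z - p z" by linarith
  from good have \<rho>: "0 < \<rho>" "\<rho> < \<delta>" and \<omega>\<rho>: "0 < \<omega> \<rho>" "\<omega> \<rho> < \<epsilon>"
    and below: "\<And>w. w \<in> cball x0 R \<Longrightarrow> v \<rho> w < \<epsilon>"
    using \<omega>_pos by (auto simp: good_def)
  have outside: "v \<rho> w - p w \<le> -1" if "w \<notin> cball x0 R" for w
    using v_le[OF \<rho>(1), of w] p_far[of w] that by simp
  have W_le: "v \<rho> w - p w \<le> \<epsilon>" for w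
    using below[of w] outside[of w] p_nonneg[of w] \<epsilon>(1) by fastforce
  have W_far: "v \<rho> w - p w < - 2 * \<epsilon>" if "\<delta> \<le> dist w x0" for w
    using below[of w] outside[of w] m(2)[of w] that \<epsilon> by (force simp: dist_commute)
  obtain y \<xi> where "dist y x0 < \<delta>" "\<bar>\<xi>\<bar> \<le> \<epsilon>" "\<forall>w. v \<rho> w - p w \<le> \<xi>"
    "\<xi> - \<omega> \<rho> \<le> v \<rho> y - p y"
    using near_maximizer_of_strict_max[where W = "\<lambda>w. v \<rho> w - p w" and \<delta> = \<delta> and a = x0,
        OF W_le z W_far \<omega>\<rho>(1)] \<omega>\<rho>(2)
    by auto
  with \<rho> \<epsilon>(2) show ?thesis by (intro exI[of _ \<rho>] exI[of _ y] exI[of _ \<xi>]) auto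
qed

lemma bump_penalized_near_maximizers:
  fixes v :: "real \<Rightarrow> 'n::finite pt \<Rightarrow> real"
  assumes "0 < R" and v_le: "\<And>\<rho> z. 0 < \<rho> \<Longrightarrow> v \<rho> z \<le> B"
    and v_below: "\<And>\<epsilon>. 0 < \<epsilon> \<Longrightarrow> eventually (\<lambda>\<rho>. \<forall>z\<in>cball x0 R. v \<rho> z < \<epsilon>) (at_right 0)"
    and v_touch: "\<And>\<epsilon>. 0 < \<epsilon> \<Longrightarrow> frequently (\<lambda>(\<rho>, y). - \<epsilon> < v \<rho> y) (at_right 0 \<times>\<^sub>F nhds x0)"
  obtains K where "\<And>\<omega> \<delta>. positive_modulus \<omega> \<Longrightarrow> 0 < \<delta> \<Longrightarrow>
    \<exists>\<rho> y \<xi>. 0 < \<rho> \<and> \<rho> < \<delta> \<and> dist y x0 < \<delta> \<and> \<bar>\<xi>\<bar> < \<delta> \<and>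
      (\<forall>z. v \<rho> z - bump K x0 z \<le> \<xi>) \<and> \<xi> - \<omega> \<rho> \<le> v \<rho> y - bump K x0 y"
proof -
  obtain K where "0 < K" and sep: "\<And>r. 0 < r \<Longrightarrow> \<exists>m>0. \<forall>z. r \<le> dist x0 z \<longrightarrow> m \<le> bump K x0 z"
    and far: "\<And>z. R < dist x0 z \<Longrightarrow> B + 1 \<le> bump K x0 z"
    using bump_penalty[OF \<open>0 < R\<close>] by blast
  show thesis
  proof (rule that)
    fix \<omega> and \<delta> :: real assume "positive_modulus \<omega>" "0 < \<delta>"
    then show "\<exists>\<rho> y \<xi>. 0 < \<rho> \<and> \<rho> < \<delta> \<and> dist y x0 < \<delta> \<and> \<bar>\<xi>\<bar> < \<delta> \<and>
      (\<forall>z. v \<rho> z - bump K x0 z \<le> \<xi>) \<and> \<xi> - \<omega> \<rho> \<le> v \<rho> y - bump K x0 y"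
      using \<open>0 < K\<close> positive_modulus_pos tendsto_positive_modulus
      by (intro penalized_near_maximizers[OF v_le v_below v_touch _ bump_center isCont_bump sep far])
        (auto intro: bump_nonneg)
  qed
qed

section \<open>Half-relaxed limits and envelopes\<close>

lemma ulow_eq_uminus_ubar: "ulow u x = - ubar (\<lambda>\<rho> y. - u \<rho> y) x"
proof -
  have "(\<lambda>(\<rho>, y). ereal (- u \<rho> y)) = (\<lambda>q. - (\<lambda>(\<rho>, y). ereal (u \<rho> y)) q)"
    by auto
  then show ?thesis unfolding ulow_def ubar_def by (simp add: ereal_Limsup_uminus)
qed

lemma lstar_eq_uminus_ustar: "lstar v x = - ustar (\<lambda>y. - v y) x"
proof -
  have neg: "(\<lambda>y. ereal (- v y)) = (\<lambda>y. - ereal (v y))" by simp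
  show ?thesis unfolding lstar_def ustar_def lsc_env_def usc_env_def neg ereal_Limsup_uminus
    by simp
qed

lemma lower_semicont_iff_uminus: "lower_semicont v \<longleftrightarrow> upper_semicont (\<lambda>x. - v x)"
proof -
  have "{x. - v x < t} = {x. - t < v x}" for t by auto
  then show ?thesis unfolding lower_semicont_def upper_semicont_def by (metis minus_minus)
qed

context
  fixes u :: "real \<Rightarrow> 'n::finite pt \<Rightarrow> real" and C :: real
  assumes bounded_family: "\<And>\<rho> x. 0 < \<rho> \<Longrightarrow> \<bar>u \<rho> x\<bar> \<le> C"
begin

lemma ubar_eq_Limsup: "ereal (ubar u x) = Limsup (at_right 0 \<times>\<^sub>F nhds x) (\<lambda>(\<rho>, y). ereal (u \<rho> y))"
  and abs_ubar_le: "\<bar>ubar u x\<bar> \<le> C"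
proof -
  let ?L = "Limsup (at_right 0 \<times>\<^sub>F nhds x) (\<lambda>(\<rho>, y). ereal (u \<rho> y))"
  have "eventually (\<lambda>q. 0 < fst q \<and> True) (at_right (0::real) \<times>\<^sub>F nhds x)"
    by (intro eventually_prodI eventually_at_right_less eventually_True)
  then have "eventually (\<lambda>(\<rho>, y). ereal (u \<rho> y) \<le> C \<and> ereal (- C) \<le> u \<rho> y) (at_right 0 \<times>\<^sub>F nhds x)"
  proof (rule eventually_mono, clarsimp)
    fix \<rho> :: real and y assume "0 < \<rho>"
    from bounded_family[OF this, of y] show "u \<rho> y \<le> C \<and> - C \<le> u \<rho> y" by linarith
  qed
  then have "?L \<le> ereal C" "ereal (- C) \<le> ?L"
    by (auto intro!: Limsup_bounded le_Limsup simp: prod_filter_eq_bot elim: eventually_mono)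
  then show "ereal (ubar u x) = ?L" "\<bar>ubar u x\<bar> \<le> C"
    unfolding ubar_def by (cases ?L; simp)+
qed

lemma ubar_less_eventually:
  assumes "ubar u x < t"
  shows "eventually (\<lambda>(\<rho>, y). u \<rho> y < t) (at_right 0 \<times>\<^sub>F nhds x)"
proof -
  have "Limsup (at_right 0 \<times>\<^sub>F nhds x) (\<lambda>(\<rho>, y). ereal (u \<rho> y)) < ereal t"
    using assms unfolding ubar_eq_Limsup[symmetric] by simp
  from Limsup_lessD[OF this] show ?thesis by (rule eventually_mono) auto
qed

lemma less_ubar_frequently:
  assumes "t < ubar u x"
  shows "frequently (\<lambda>(\<rho>, y). t < u \<rho> y) (at_right 0 \<times>\<^sub>F nhds x)"
proof (rule ccontr)
  assume "\<not> ?thesis"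
  then have "eventually (\<lambda>(\<rho>, y). ereal (u \<rho> y) \<le> ereal t) (at_right 0 \<times>\<^sub>F nhds x)"
    unfolding not_frequently by (rule eventually_mono) auto
  then have "ereal (ubar u x) \<le> ereal t"
    unfolding ubar_eq_Limsup by (intro Limsup_bounded) (auto elim: eventually_mono)
  with assms show False by simp
qed

lemma upper_semicont_ubar: "upper_semicont (ubar u)"
  unfolding upper_semicont_def open_subopen[of "{x. ubar u x < _}"]
proof (intro allI ballI)
  fix t x assume "x \<in> {x. ubar u x < t}"
  then obtain t' where lt: "ubar u x < t'" "t' < t" using dense by auto
  from ubar_less_eventually[OF lt(1)] obtain Pf Pg where
    "eventually Pf (at_right 0)" "eventually Pg (nhds x)"
    and below: "\<And>\<rho> y. Pf \<rho> \<Longrightarrow> Pg y \<Longrightarrow> u \<rho> y < t'"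
    unfolding eventually_prod_filter by auto
  moreover from this(2) obtain S where S: "open S" "x \<in> S" "\<And>y. y \<in> S \<Longrightarrow> Pg y"
    unfolding eventually_nhds by auto
  have "ubar u x' < t" if "x' \<in> S" for x'
  proof -
    have "eventually (\<lambda>q. Pf (fst q) \<and> snd q \<in> S) (at_right 0 \<times>\<^sub>F nhds x')"
      using \<open>eventually Pf (at_right 0)\<close> eventually_nhds_in_open[OF S(1) that]
      by (rule eventually_prodI)
    then have "eventually (\<lambda>(\<rho>, y). ereal (u \<rho> y) \<le> ereal t') (at_right 0 \<times>\<^sub>F nhds x')"
    proof (rule eventually_mono, clarsimp)
      fix \<rho> y assume "Pf \<rho>" "y \<in> S"
      from below[OF this(1) S(3)[OF this(2)]] show "u \<rho> y \<le> t'" by simp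
    qed
    then have "ereal (ubar u x') \<le> ereal t'"
      unfolding ubar_eq_Limsup by (intro Limsup_bounded) (auto elim: eventually_mono)
    with lt(2) show ?thesis by simp
  qed
  with S(1,2) show "\<exists>T. open T \<and> x \<in> T \<and> T \<subseteq> {x. ubar u x < t}" by blast
qed

lemma frequently_above_near_ubar:
  assumes "isCont \<phi> x0" and "ubar u x0 = \<phi> x0 + c" and "0 < \<epsilon>"
  shows "frequently (\<lambda>(\<rho>, y). \<phi> y + c - \<epsilon> < u \<rho> y) (at_right 0 \<times>\<^sub>F nhds x0)"
proof -
  have "frequently (\<lambda>(\<rho>, y). \<phi> x0 + c - \<epsilon> / 2 < u \<rho> y) (at_right 0 \<times>\<^sub>F nhds x0)"
    using assms(2,3) by (intro less_ubar_frequently) simp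
  moreover have "(\<phi> \<longlongrightarrow> \<phi> x0) (nhds x0)"
    using assms(1) unfolding isCont_def tendsto_at_iff_tendsto_nhds .
  then have "eventually (\<lambda>y. \<phi> y < \<phi> x0 + \<epsilon> / 2) (nhds x0)"
    by (rule order_tendstoD(2)) (use assms(3) in simp)
  then have "eventually (\<lambda>q. True \<and> \<phi> (snd q) < \<phi> x0 + \<epsilon> / 2) (at_right (0::real) \<times>\<^sub>F nhds x0)"
    by (intro eventually_prodI eventually_True)
  ultimately show ?thesis
    by (rule frequently_eventually_frequently[THEN frequently_elim1]) auto
qed

lemma eventually_below_on_cball:
  assumes boundary: "\<And>\<rho> w. 0 < \<rho> \<Longrightarrow> w \<notin> \<Omega> \<Longrightarrow> u \<rho> w = g w"
    and \<phi>_cont: "\<And>x. isCont \<phi> x"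
    and max: "\<And>y. y \<in> closure \<Omega> \<Longrightarrow> ubar u y \<le> \<phi> y + c"
    and exterior: "\<And>w. w \<in> ball x0 R - \<Omega> \<Longrightarrow> g w \<le> \<phi> w + c"
    and "0 < R" and "0 < \<epsilon>"
  shows "eventually (\<lambda>\<rho>. \<forall>z\<in>cball x0 (R / 2). u \<rho> z < \<phi> z + c + \<epsilon>) (at_right 0)"
proof (rule eventually_ball_compact[OF compact_cball])
  fix z assume z: "z \<in> cball x0 (R / 2)"
  show "eventually (\<lambda>(\<rho>, y). u \<rho> y < \<phi> y + c + \<epsilon>) (at_right 0 \<times>\<^sub>F nhds z)"
  proof (cases "z \<in> closure \<Omega>")
    case True
    have "(\<phi> \<longlongrightarrow> \<phi> z) (nhds z)"
      using \<phi>_cont unfolding isCont_def tendsto_at_iff_tendsto_nhds by blast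
    then have "eventually (\<lambda>y. \<phi> z - \<epsilon> / 2 < \<phi> y) (nhds z)"
      by (rule order_tendstoD(1)) (use \<open>0 < \<epsilon>\<close> in simp)
    then have "eventually (\<lambda>q. True \<and> \<phi> z - \<epsilon> / 2 < \<phi> (snd q)) (at_right (0::real) \<times>\<^sub>F nhds z)"
      by (intro eventually_prodI eventually_True)
    moreover have "eventually (\<lambda>(\<rho>, y). u \<rho> y < \<phi> z + c + \<epsilon> / 2) (at_right 0 \<times>\<^sub>F nhds z)"
      using max[OF True] \<open>0 < \<epsilon>\<close> by (intro ubar_less_eventually) simp
    ultimately show ?thesis by (rule eventually_mono[OF eventually_conj]) auto
  next
    case False
    with z have "z \<in> ball x0 R - closure \<Omega>" using \<open>0 < R\<close> by auto
    then have "eventually (\<lambda>y. y \<in> ball x0 R - closure \<Omega>) (nhds z)"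
      by (intro eventually_nhds_in_open) auto
    then have "eventually (\<lambda>q. 0 < fst q \<and> snd q \<in> ball x0 R - closure \<Omega>)
        (at_right (0::real) \<times>\<^sub>F nhds z)"
      by (intro eventually_prodI eventually_at_right_less)
    moreover have below: "u \<rho> y < \<phi> y + c + \<epsilon>" if "0 < \<rho>" "y \<in> ball x0 R - closure \<Omega>" for \<rho> y
    proof -
      have "y \<notin> \<Omega>" using that(2) closure_subset by blast
      with that show ?thesis using boundary exterior \<open>0 < \<epsilon>\<close> by fastforce
    qed
    ultimately show ?thesis
      by (elim eventually_mono) (simp add: case_prod_beta below)
  qed
qed

end

lemma ustar_eq_Limsup:
  assumes "v \<in> Xbar"
  shows "ereal (ustar v x) = Limsup (nhds x) (\<lambda>y. ereal (v y))"
proof -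
  obtain B where B: "\<And>y. \<bar>v y\<bar> \<le> B"
    using assms unfolding Xbar_def bounded_iff by auto
  let ?L = "Limsup (nhds x) (\<lambda>y. ereal (v y))"
  have "ereal (v y) \<le> B \<and> ereal (- B) \<le> v y" for y
    using B[of y] by (auto simp: abs_le_iff)
  then have "eventually (\<lambda>y. ereal (v y) \<le> B \<and> ereal (- B) \<le> v y) (nhds x)"
    by (intro always_eventually) blast
  then have "?L \<le> ereal B" "ereal (- B) \<le> ?L"
    by (auto intro!: Limsup_bounded le_Limsup elim: eventually_mono)
  then show ?thesis
    unfolding ustar_def usc_env_def by (cases ?L) simp_all
qed

lemma ustar_upper_semicont:
  assumes "upper_semicont v"
  shows "ustar v x = v x"
proof -
  have "eventually (\<lambda>y. ereal (v y) < t) (nhds x)" if lt: "ereal (v x) < t" for t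
  proof -
    obtain r where r: "v x < r" "ereal r < t"
      using ereal_dense2[OF lt] by auto
    have "eventually (\<lambda>y. y \<in> {y. v y < r}) (nhds x)"
      using assms r(1) unfolding upper_semicont_def by (intro eventually_nhds_in_open) auto
    then show ?thesis
    proof (rule eventually_mono)
      fix y assume "y \<in> {y. v y < r}"
      then have "ereal (v y) < ereal r" by simp
      then show "ereal (v y) < t" using r(2) by (rule less_trans)
    qed
  qed
  then have "Limsup (nhds x) (\<lambda>y. ereal (v y)) \<le> ereal (v x)"
    unfolding Limsup_le_iff by blast
  moreover have "ereal (v x) \<le> Limsup (nhds x) (\<lambda>y. ereal (v y))"
  proof (rule ccontr)
    assume "\<not> ?thesis"
    then have "Limsup (nhds x) (\<lambda>y. ereal (v y)) < ereal (v x)" by simp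
    from eventually_nhds_x_imp_x[OF Limsup_lessD[OF this]] show False by simp
  qed
  ultimately show ?thesis unfolding ustar_def usc_env_def by simp
qed

lemma below_on_ball_if_ustar_less:
  assumes "g \<in> Xbar" and "isCont \<phi> x" and "ustar g x < \<phi> x + c"
  shows "\<exists>R>0. \<forall>w\<in>ball x R. g w \<le> \<phi> w + c"
proof -
  define t where "t = (ustar g x + \<phi> x + c) / 2"
  have "Limsup (nhds x) (\<lambda>y. ereal (g y)) < ereal t"
    using assms(3) unfolding ustar_eq_Limsup[OF assms(1), symmetric] t_def by simp
  from Limsup_lessD[OF this] have "eventually (\<lambda>w. g w < t) (nhds x)"
    by (rule eventually_mono) simp
  moreover have "(\<phi> \<longlongrightarrow> \<phi> x) (nhds x)"
    using assms(2) unfolding isCont_def tendsto_at_iff_tendsto_nhds .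
  then have "eventually (\<lambda>w. t - c < \<phi> w) (nhds x)"
    by (rule order_tendstoD(1)) (use assms(3) in \<open>simp add: t_def\<close>)
  ultimately have "eventually (\<lambda>w. g w \<le> \<phi> w + c) (nhds x)"
    by eventually_elim simp
  then show ?thesis
    unfolding eventually_nhds_metric by (auto simp: dist_commute)
qed

lemma abs_ulow_le:
  assumes "\<And>\<rho> x. 0 < \<rho> \<Longrightarrow> \<bar>u \<rho> x\<bar> \<le> C"
  shows "\<bar>ulow u x\<bar> \<le> C"
  using abs_ubar_le[of "\<lambda>\<rho> y. - u \<rho> y" C x] assms by (simp add: ulow_eq_uminus_ubar)

lemma lower_semicont_ulow:
  assumes "\<And>\<rho> x. 0 < \<rho> \<Longrightarrow> \<bar>u \<rho> x\<bar> \<le> C"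
  shows "lower_semicont (ulow u)"
  using upper_semicont_ubar[of "\<lambda>\<rho> y. - u \<rho> y" C] assms
  by (simp add: lower_semicont_iff_uminus ulow_eq_uminus_ubar)

lemma lstar_lower_semicont: "lower_semicont v \<Longrightarrow> lstar v x = v x"
  using ustar_upper_semicont[of "\<lambda>x. - v x" x]
  by (simp add: lower_semicont_iff_uminus lstar_eq_uminus_ustar)

lemma above_on_ball_if_less_lstar:
  assumes "g \<in> Xbar" and "isCont \<phi> x" and "\<phi> x + c < lstar g x"
  shows "\<exists>R>0. \<forall>w\<in>ball x R. \<phi> w + c \<le> g w"
proof -
  have "(\<lambda>x. - g x) \<in> Xbar" using assms(1) by (simp add: Xbar_def bounded_iff)
  moreover have "isCont (\<lambda>x. - \<phi> x) x" using assms(2) by (rule isCont_minus)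
  moreover have "ustar (\<lambda>x. - g x) x < - \<phi> x + - c"
    using assms(3) by (simp add: lstar_eq_uminus_ustar)
  ultimately have "\<exists>R>0. \<forall>w\<in>ball x R. - g w \<le> - \<phi> w + - c" by (rule below_on_ball_if_ustar_less)
  then show ?thesis by force
qed

lemma eventually_above_on_cball:
  assumes "\<And>\<rho> x. 0 < \<rho> \<Longrightarrow> \<bar>u \<rho> x\<bar> \<le> C"
    and boundary: "\<And>\<rho> w. 0 < \<rho> \<Longrightarrow> w \<notin> \<Omega> \<Longrightarrow> u \<rho> w = g w"
    and \<phi>_cont: "\<And>x. isCont \<phi> x"
    and min: "\<And>y. y \<in> closure \<Omega> \<Longrightarrow> \<phi> y + c \<le> ulow u y"
    and exterior: "\<And>w. w \<in> ball x0 R - \<Omega> \<Longrightarrow> \<phi> w + c \<le> g w"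
    and "0 < R" and "0 < \<epsilon>"
  shows "eventually (\<lambda>\<rho>. \<forall>z\<in>cball x0 (R / 2). \<phi> z + c - \<epsilon> < u \<rho> z) (at_right 0)"
proof -
  have "eventually (\<lambda>\<rho>. \<forall>z\<in>cball x0 (R / 2). - u \<rho> z < - \<phi> z + - c + \<epsilon>) (at_right 0)"
  proof (rule eventually_below_on_cball[where g = "\<lambda>x. - g x" and \<Omega> = \<Omega>])
    show "\<bar>- u \<rho> x\<bar> \<le> C" if "0 < \<rho>" for \<rho> x
      using assms(1)[OF that] by simp
    show "- u \<rho> w = - g w" if "0 < \<rho>" "w \<notin> \<Omega>" for \<rho> w
      using boundary[OF that] by simp
    show "isCont (\<lambda>x. - \<phi> x) x" for x
      by (intro isCont_minus \<phi>_cont)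
    show "ubar (\<lambda>\<rho> y. - u \<rho> y) y \<le> - \<phi> y + - c" if "y \<in> closure \<Omega>" for y
      using min[OF that] by (simp add: ulow_eq_uminus_ubar)
    show "- g w \<le> - \<phi> w + - c" if "w \<in> ball x0 R - \<Omega>" for w
      using exterior[OF that] by simp
  qed (use assms(6,7) in auto)
  then show ?thesis by (simp add: algebra_simps)
qed

lemma frequently_below_near_ulow:
  assumes "\<And>\<rho> x. 0 < \<rho> \<Longrightarrow> \<bar>u \<rho> x\<bar> \<le> C"
    and "isCont \<phi> x0" and "ulow u x0 = \<phi> x0 + c" and "0 < \<epsilon>"
  shows "frequently (\<lambda>(\<rho>, y). u \<rho> y < \<phi> y + c + \<epsilon>) (at_right 0 \<times>\<^sub>F nhds x0)"
proof -
  have "frequently (\<lambda>(\<rho>, y). - \<phi> y + - c - \<epsilon> < - u \<rho> y) (at_right 0 \<times>\<^sub>F nhds x0)"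
  proof (rule frequently_above_near_ubar)
    show "\<bar>- u \<rho> x\<bar> \<le> C" if "0 < \<rho>" for \<rho> x
      using assms(1)[OF that] by simp
    show "isCont (\<lambda>x. - \<phi> x) x0"
      by (intro isCont_minus assms(2))
    show "ubar (\<lambda>\<rho> y. - u \<rho> y) x0 = - \<phi> x0 + - c"
      using assms(3) by (simp add: ulow_eq_uminus_ubar)
  qed (use assms(4) in auto)
  then show ?thesis by (simp add: algebra_simps)
qed

section \<open>Monotone consistent schemes\<close>

locale monotone_consistent_scheme =
  fixes \<Omega> :: "'n::finite pt set" and X :: "('n pt \<Rightarrow> real) set" and g :: "'n pt \<Rightarrow> real"
    and A :: "real \<Rightarrow> 'n pt \<Rightarrow> ('n pt \<Rightarrow> real) \<Rightarrow> real \<Rightarrow> real"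
    and F :: "'n pt \<Rightarrow> real \<Rightarrow> 'n pt \<Rightarrow> 'n mat \<Rightarrow> real"
    and u :: "real \<Rightarrow> 'n pt \<Rightarrow> real" and C :: real
  assumes open_domain: "open \<Omega>"
    and Cb_inf_subset: "Cb_inf \<subseteq> X"
    and boundary_data_bounded: "g \<in> Xbar"
    and scheme_mono: "\<And>\<rho> x \<phi> s1 s2. 0 < \<rho> \<Longrightarrow> x \<in> \<Omega> \<Longrightarrow> \<phi> \<in> X \<Longrightarrow> s1 \<le> s2 \<Longrightarrow>
                        A \<rho> x \<phi> s1 \<le> A \<rho> x \<phi> s2"
    and scheme_consistent: "consistent \<Omega> g A F"
    and solutions: "\<And>\<rho>. 0 < \<rho> \<Longrightarrow> dpp_sol \<Omega> X g A \<rho> (u \<rho>)"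
    and solutions_bounded: "\<And>\<rho> x. 0 < \<rho> \<Longrightarrow> \<bar>u \<rho> x\<bar> \<le> C"
begin

lemma solution_outside: "0 < \<rho> \<Longrightarrow> w \<notin> \<Omega> \<Longrightarrow> u \<rho> w = g w"
  using solutions[of \<rho>] unfolding dpp_sol_def dpp_subsol_def dpp_supersol_def
  by (meson order_antisym)

lemma scheme_nonpos_if_test_above:
  assumes "0 < \<rho>" "\<psi> \<in> X" "\<And>z. u \<rho> z \<le> \<psi> z" "s \<le> u \<rho> y"
  shows "Bop \<Omega> g A \<rho> y \<psi> s \<le> 0"
proof (cases "y \<in> \<Omega>")
  case True
  have "A \<rho> y \<psi> s \<le> A \<rho> y \<psi> (u \<rho> y)"
    by (rule scheme_mono[OF assms(1) True assms(2,4)])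
  also have "\<dots> \<le> 0"
    using solutions[OF assms(1)] True assms(2,3) unfolding dpp_sol_def dpp_subsol_def by blast
  finally show ?thesis using True by (simp add: Bop_def)
next
  case False
  then show ?thesis using assms(4) solution_outside[OF assms(1)] by (simp add: Bop_def)
qed

lemma scheme_nonneg_if_test_below:
  assumes "0 < \<rho>" "\<psi> \<in> X" "\<And>z. \<psi> z \<le> u \<rho> z" "u \<rho> y \<le> s"
  shows "0 \<le> Bop \<Omega> g A \<rho> y \<psi> s"
proof (cases "y \<in> \<Omega>")
  case True
  have "0 \<le> A \<rho> y \<psi> (u \<rho> y)"
    using solutions[OF assms(1)] True assms(2,3) unfolding dpp_sol_def dpp_supersol_def by blast
  also have "\<dots> \<le> A \<rho> y \<psi> s"
    by (rule scheme_mono[OF assms(1) True assms(2,4)])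
  finally show ?thesis using True by (simp add: Bop_def)
next
  case False
  then show ?thesis using assms(4) solution_outside[OF assms(1)] by (simp add: Bop_def)
qed

lemma bump_test_in_X:
  assumes "\<phi> \<in> Cb_inf"
  shows "(\<lambda>z. \<phi> z + (c + bump K x0 z) + \<xi>) \<in> X"
proof -
  have "(\<lambda>z. \<phi> z + ((c + \<xi>) + bump K x0 z)) \<in> Cb_inf"
    by (rule bump_perturbation(1)[OF assms])
  then show ?thesis using Cb_inf_subset by (auto simp: algebra_simps)
qed

lemma Liminf_scheme_nonpos:
  assumes \<psi>_shift: "\<And>\<xi>. (\<lambda>z. \<psi> z + \<xi>) \<in> X"
    and near: "\<And>\<delta>. 0 < \<delta> \<Longrightarrow> \<exists>\<rho> y \<xi>. 0 < \<rho> \<and> \<rho> < \<delta> \<and> dist y x0 < \<delta> \<and> \<bar>\<xi>\<bar> < \<delta> \<and>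
      (\<forall>z. u \<rho> z \<le> \<psi> z + \<xi>) \<and> \<psi> y + \<xi> - \<omega> \<rho> \<le> u \<rho> y"
  shows "Liminf (at_right 0 \<times>\<^sub>F nhds x0 \<times>\<^sub>F nhds 0)
    (\<lambda>(\<rho>, y, \<xi>). ereal (Bop \<Omega> g A \<rho> y (\<lambda>z. \<psi> z + \<xi>) (\<psi> y + \<xi> - \<omega> \<rho>))) \<le> 0"
proof (rule Liminf_le_if_frequently, rule frequently_at_right_prod_nhdsI)
  fix \<delta> :: real assume "0 < \<delta>"
  then obtain \<rho> y \<xi> where \<rho>: "0 < \<rho>" "\<rho> < \<delta>" "dist y x0 < \<delta>" "\<bar>\<xi>\<bar> < \<delta>"
    and above: "\<And>z. u \<rho> z \<le> \<psi> z + \<xi>" and touch: "\<psi> y + \<xi> - \<omega> \<rho> \<le> u \<rho> y"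
    using near by blast
  have "Bop \<Omega> g A \<rho> y (\<lambda>z. \<psi> z + \<xi>) (\<psi> y + \<xi> - \<omega> \<rho>) \<le> 0"
    using scheme_nonpos_if_test_above[OF \<rho>(1) \<psi>_shift above touch] .
  with \<rho> show "\<exists>\<rho> y \<xi>. 0 < \<rho> \<and> \<rho> < \<delta> \<and> dist y x0 < \<delta> \<and> \<bar>\<xi>\<bar> < \<delta> \<and>
    (\<lambda>(\<rho>, y, \<xi>). ereal (Bop \<Omega> g A \<rho> y (\<lambda>z. \<psi> z + \<xi>) (\<psi> y + \<xi> - \<omega> \<rho>))) (\<rho>, y, \<xi>) \<le> 0"
    by auto
qed

lemma Limsup_scheme_nonneg:
  assumes \<psi>_shift: "\<And>\<xi>. (\<lambda>z. \<psi> z + \<xi>) \<in> X"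
    and near: "\<And>\<delta>. 0 < \<delta> \<Longrightarrow> \<exists>\<rho> y \<xi>. 0 < \<rho> \<and> \<rho> < \<delta> \<and> dist y x0 < \<delta> \<and> \<bar>\<xi>\<bar> < \<delta> \<and>
      (\<forall>z. \<psi> z + \<xi> \<le> u \<rho> z) \<and> u \<rho> y \<le> \<psi> y + \<xi> + \<omega> \<rho>"
  shows "0 \<le> Limsup (at_right 0 \<times>\<^sub>F nhds x0 \<times>\<^sub>F nhds 0)
    (\<lambda>(\<rho>, y, \<xi>). ereal (Bop \<Omega> g A \<rho> y (\<lambda>z. \<psi> z + \<xi>) (\<psi> y + \<xi> + \<omega> \<rho>)))"
proof (rule Limsup_ge_if_frequently, rule frequently_at_right_prod_nhdsI)
  fix \<delta> :: real assume "0 < \<delta>"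
  then obtain \<rho> y \<xi> where \<rho>: "0 < \<rho>" "\<rho> < \<delta>" "dist y x0 < \<delta>" "\<bar>\<xi>\<bar> < \<delta>"
    and below: "\<And>z. \<psi> z + \<xi> \<le> u \<rho> z" and touch: "u \<rho> y \<le> \<psi> y + \<xi> + \<omega> \<rho>"
    using near by blast
  have "0 \<le> Bop \<Omega> g A \<rho> y (\<lambda>z. \<psi> z + \<xi>) (\<psi> y + \<xi> + \<omega> \<rho>)"
    using scheme_nonneg_if_test_below[OF \<rho>(1) \<psi>_shift below touch] .
  with \<rho> show "\<exists>\<rho> y \<xi>. 0 < \<rho> \<and> \<rho> < \<delta> \<and> dist y x0 < \<delta> \<and> \<bar>\<xi>\<bar> < \<delta> \<and>
    0 \<le> (\<lambda>(\<rho>, y, \<xi>). ereal (Bop \<Omega> g A \<rho> y (\<lambda>z. \<psi> z + \<xi>) (\<psi> y + \<xi> + \<omega> \<rho>))) (\<rho>, y, \<xi>)"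
    by auto
qed

lemma ubar_viscosity_inequality:
  assumes \<phi>: "\<phi> \<in> Cb_inf" and x0: "x0 \<in> closure \<Omega>"
    and max: "\<And>y. y \<in> closure \<Omega> \<Longrightarrow> ubar u y - \<phi> y \<le> ubar u x0 - \<phi> x0"
    and "0 < R" and exterior: "\<And>w. w \<in> ball x0 R - \<Omega> \<Longrightarrow> g w \<le> \<phi> w + (ubar u x0 - \<phi> x0)"
  shows "(x0 \<in> \<Omega> \<longrightarrow> Flower \<Omega> F x0 (ubar u x0) (grad \<phi> x0) (hess \<phi> x0) \<le> 0) \<and>
    (x0 \<in> frontier \<Omega> \<longrightarrow>
       min (ereal (ubar u x0 - ustar g x0)) (Flower \<Omega> F x0 (ubar u x0) (grad \<phi> x0) (hess \<phi> x0)) \<le> 0)"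
proof -
  define c where "c = ubar u x0 - \<phi> x0"
  have \<phi>_cont: "\<And>x. isCont \<phi> x" using \<phi> by (rule Cb_inf_isCont)
  obtain B\<phi> where B\<phi>: "\<And>z. \<bar>\<phi> z\<bar> \<le> B\<phi>"
    using Cb_inf_differentiable_bounded[OF \<phi>] unfolding bounded_iff by auto
  obtain K where near: "\<And>\<omega> \<delta>. positive_modulus \<omega> \<Longrightarrow> 0 < \<delta> \<Longrightarrow>
    \<exists>\<rho> y \<xi>. 0 < \<rho> \<and> \<rho> < \<delta> \<and> dist y x0 < \<delta> \<and> \<bar>\<xi>\<bar> < \<delta> \<and>
      (\<forall>z. (u \<rho> z - \<phi> z - c) - bump K x0 z \<le> \<xi>) \<and> \<xi> - \<omega> \<rho> \<le> (u \<rho> y - \<phi> y - c) - bump K x0 y"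
  proof (rule bump_penalized_near_maximizers[where R = "R / 2" and B = "C + B\<phi> + \<bar>c\<bar>"])
    show "u \<rho> z - \<phi> z - c \<le> C + B\<phi> + \<bar>c\<bar>" if "0 < \<rho>" for \<rho> z
      using solutions_bounded[OF that, of z] B\<phi>[of z] by linarith
    show "eventually (\<lambda>\<rho>. \<forall>z\<in>cball x0 (R / 2). u \<rho> z - \<phi> z - c < \<epsilon>) (at_right 0)" if "0 < \<epsilon>" for \<epsilon>
      using eventually_below_on_cball[OF solutions_bounded solution_outside \<phi>_cont _ exterior
          \<open>0 < R\<close> that] max
      by (simp add: c_def algebra_simps)
    show "frequently (\<lambda>(\<rho>, y). - \<epsilon> < u \<rho> y - \<phi> y - c) (at_right 0 \<times>\<^sub>F nhds x0)" if "0 < \<epsilon>" for \<epsilon>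
      using frequently_above_near_ubar[OF solutions_bounded \<phi>_cont _ that, where c = c]
      by (simp add: c_def algebra_simps)
  qed (use \<open>0 < R\<close> in auto)
  define \<psi> where "\<psi> = (\<lambda>z. \<phi> z + (c + bump K x0 z))"
  have \<psi>: "\<psi> \<in> Cb_inf" "\<psi> x0 = ubar u x0" "grad \<psi> x0 = grad \<phi> x0" "hess \<psi> x0 = hess \<phi> x0"
    using bump_perturbation[OF \<phi>, of c K x0] by (simp_all add: \<psi>_def bump_center c_def)
  let ?L = "\<lambda>\<omega>. Liminf (at_right 0 \<times>\<^sub>F nhds x0 \<times>\<^sub>F nhds 0)
    (\<lambda>(\<rho>, y, \<xi>). ereal (Bop \<Omega> g A \<rho> y (\<lambda>z. \<psi> z + \<xi>) (\<psi> y + \<xi> - \<omega> \<rho>)))"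
  obtain \<omega> where \<omega>: "positive_modulus \<omega>"
    and interior: "x0 \<in> \<Omega> \<longrightarrow> Flower \<Omega> F x0 (\<psi> x0) (grad \<psi> x0) (hess \<psi> x0) \<le> ?L \<omega>"
    and boundary: "x0 \<in> frontier \<Omega> \<longrightarrow>
      min (ereal (\<psi> x0 - ustar g x0)) (Flower \<Omega> F x0 (\<psi> x0) (grad \<psi> x0) (hess \<psi> x0)) \<le> ?L \<omega>"
    using scheme_consistent x0 \<psi>(1) unfolding consistent_def Let_def by blast
  have "?L \<omega> \<le> 0"
  proof (rule Liminf_scheme_nonpos)
    show "(\<lambda>z. \<psi> z + \<xi>) \<in> X" for \<xi>
      unfolding \<psi>_def by (rule bump_test_in_X[OF \<phi>])
    show "\<exists>\<rho> y \<xi>. 0 < \<rho> \<and> \<rho> < \<delta> \<and> dist y x0 < \<delta> \<and> \<bar>\<xi>\<bar> < \<delta> \<and>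
      (\<forall>z. u \<rho> z \<le> \<psi> z + \<xi>) \<and> \<psi> y + \<xi> - \<omega> \<rho> \<le> u \<rho> y" if "0 < \<delta>" for \<delta>
      using near[OF \<omega> that] unfolding \<psi>_def by (simp add: algebra_simps)
  qed
  with interior boundary show ?thesis unfolding \<psi> by auto
qed

lemma ulow_viscosity_inequality:
  assumes \<phi>: "\<phi> \<in> Cb_inf" and x0: "x0 \<in> closure \<Omega>"
    and min: "\<And>y. y \<in> closure \<Omega> \<Longrightarrow> ulow u x0 - \<phi> x0 \<le> ulow u y - \<phi> y"
    and "0 < R" and exterior: "\<And>w. w \<in> ball x0 R - \<Omega> \<Longrightarrow> \<phi> w + (ulow u x0 - \<phi> x0) \<le> g w"
  shows "(x0 \<in> \<Omega> \<longrightarrow> 0 \<le> Fupper \<Omega> F x0 (ulow u x0) (grad \<phi> x0) (hess \<phi> x0)) \<and>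
    (x0 \<in> frontier \<Omega> \<longrightarrow>
       0 \<le> max (ereal (ulow u x0 - lstar g x0)) (Fupper \<Omega> F x0 (ulow u x0) (grad \<phi> x0) (hess \<phi> x0)))"
proof -
  define c where "c = ulow u x0 - \<phi> x0"
  have \<phi>_cont: "\<And>x. isCont \<phi> x" using \<phi> by (rule Cb_inf_isCont)
  obtain B\<phi> where B\<phi>: "\<And>z. \<bar>\<phi> z\<bar> \<le> B\<phi>"
    using Cb_inf_differentiable_bounded[OF \<phi>] unfolding bounded_iff by auto
  obtain K where near: "\<And>\<omega> \<delta>. positive_modulus \<omega> \<Longrightarrow> 0 < \<delta> \<Longrightarrow>
    \<exists>\<rho> y \<xi>. 0 < \<rho> \<and> \<rho> < \<delta> \<and> dist y x0 < \<delta> \<and> \<bar>\<xi>\<bar> < \<delta> \<and>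
      (\<forall>z. (\<phi> z + c - u \<rho> z) - bump K x0 z \<le> \<xi>) \<and> \<xi> - \<omega> \<rho> \<le> (\<phi> y + c - u \<rho> y) - bump K x0 y"
  proof (rule bump_penalized_near_maximizers[where R = "R / 2" and B = "C + B\<phi> + \<bar>c\<bar>"])
    show "\<phi> z + c - u \<rho> z \<le> C + B\<phi> + \<bar>c\<bar>" if "0 < \<rho>" for \<rho> z
      using solutions_bounded[OF that, of z] B\<phi>[of z] by linarith
    show "eventually (\<lambda>\<rho>. \<forall>z\<in>cball x0 (R / 2). \<phi> z + c - u \<rho> z < \<epsilon>) (at_right 0)" if "0 < \<epsilon>" for \<epsilon>
      using eventually_above_on_cball[OF solutions_bounded solution_outside \<phi>_cont _ exterior
          \<open>0 < R\<close> that] min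
      by (simp add: c_def algebra_simps)
    show "frequently (\<lambda>(\<rho>, y). - \<epsilon> < \<phi> y + c - u \<rho> y) (at_right 0 \<times>\<^sub>F nhds x0)" if "0 < \<epsilon>" for \<epsilon>
      using frequently_below_near_ulow[OF solutions_bounded \<phi>_cont _ that, where c = c]
      by (simp add: c_def algebra_simps)
  qed (use \<open>0 < R\<close> in auto)
  define \<psi> where "\<psi> = (\<lambda>z. \<phi> z + (c + bump (- K) x0 z))"
  have \<psi>: "\<psi> \<in> Cb_inf" "\<psi> x0 = ulow u x0" "grad \<psi> x0 = grad \<phi> x0" "hess \<psi> x0 = hess \<phi> x0"
    using bump_perturbation[OF \<phi>, of c "- K" x0] by (simp_all add: \<psi>_def bump_center c_def)
  let ?L = "\<lambda>\<omega>. Limsup (at_right 0 \<times>\<^sub>F nhds x0 \<times>\<^sub>F nhds 0)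
    (\<lambda>(\<rho>, y, \<xi>). ereal (Bop \<Omega> g A \<rho> y (\<lambda>z. \<psi> z + \<xi>) (\<psi> y + \<xi> + \<omega> \<rho>)))"
  obtain \<omega> where \<omega>: "positive_modulus \<omega>"
    and interior: "x0 \<in> \<Omega> \<longrightarrow> ?L \<omega> \<le> Fupper \<Omega> F x0 (\<psi> x0) (grad \<psi> x0) (hess \<psi> x0)"
    and boundary: "x0 \<in> frontier \<Omega> \<longrightarrow>
      ?L \<omega> \<le> max (ereal (\<psi> x0 - lstar g x0)) (Fupper \<Omega> F x0 (\<psi> x0) (grad \<psi> x0) (hess \<psi> x0))"
    using scheme_consistent x0 \<psi>(1) unfolding consistent_def Let_def by blast
  have "0 \<le> ?L \<omega>"
  proof (rule Limsup_scheme_nonneg)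
    show "(\<lambda>z. \<psi> z + \<xi>) \<in> X" for \<xi>
      unfolding \<psi>_def by (rule bump_test_in_X[OF \<phi>])
    fix \<delta> :: real assume "0 < \<delta>"
    from near[OF \<omega> this] obtain \<rho> y \<xi> where "0 < \<rho> \<and> \<rho> < \<delta> \<and> dist y x0 < \<delta> \<and> \<bar>- \<xi>\<bar> < \<delta> \<and>
      (\<forall>z. \<psi> z + - \<xi> \<le> u \<rho> z) \<and> u \<rho> y \<le> \<psi> y + - \<xi> + \<omega> \<rho>"
      unfolding \<psi>_def by (auto simp: bump_def algebra_simps)
    then show "\<exists>\<rho> y \<xi>. 0 < \<rho> \<and> \<rho> < \<delta> \<and> dist y x0 < \<delta> \<and> \<bar>\<xi>\<bar> < \<delta> \<and>
      (\<forall>z. \<psi> z + \<xi> \<le> u \<rho> z) \<and> u \<rho> y \<le> \<psi> y + \<xi> + \<omega> \<rho>" by blast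
  qed
  with interior boundary show ?thesis unfolding \<psi> by (auto intro: order_trans)
qed

lemma visc_subsol_ubar: "visc_subsol \<Omega> g F (ubar u)"
proof -
  have ustar_ubar: "ustar (ubar u) = ubar u"
    using ustar_upper_semicont[OF upper_semicont_ubar[of u C, OF solutions_bounded]] by blast
  have "ubar u \<in> Xbar"
    using abs_ubar_le[of u C, OF solutions_bounded] unfolding Xbar_def bounded_iff by auto
  moreover have "(x \<in> \<Omega> \<longrightarrow> Flower \<Omega> F x (ubar u x) (grad \<phi> x) (hess \<phi> x) \<le> 0) \<and>
    (x \<in> frontier \<Omega> \<longrightarrow>
       min (ereal (ubar u x - ustar g x)) (Flower \<Omega> F x (ubar u x) (grad \<phi> x) (hess \<phi> x)) \<le> 0)"
    if \<phi>: "\<phi> \<in> Cb_inf" and x: "x \<in> closure \<Omega>"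
      and max: "\<forall>y\<in>closure \<Omega>. ubar u y - \<phi> y \<le> ubar u x - \<phi> x" for \<phi> x
  proof -
    note inequality = ubar_viscosity_inequality[OF \<phi> x max[rule_format]]
    consider (interior) "x \<in> \<Omega>" | (below_g) "x \<notin> \<Omega>" "ubar u x \<le> ustar g x"
      | (above_g) "ustar g x < ubar u x"
      by fastforce
    then show ?thesis
    proof cases
      case interior
      then obtain R where "0 < R" "ball x R \<subseteq> \<Omega>"
        using open_domain open_contains_ball by blast
      then show ?thesis by (intro inequality) blast+
    next
      case below_g
      then show ?thesis by (simp add: min_le_iff_disj)
    next
      case above_g
      then obtain R where "0 < R" "\<forall>w\<in>ball x R. g w \<le> \<phi> w + (ubar u x - \<phi> x)"
        using below_on_ball_if_ustar_less[OF boundary_data_bounded Cb_inf_isCont[OF \<phi>, of x],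
            where c = "ubar u x - \<phi> x"] by auto
      then show ?thesis by (intro inequality) blast+
    qed
  qed
  ultimately show ?thesis unfolding visc_subsol_def ustar_ubar by blast
qed

lemma visc_supersol_ulow: "visc_supersol \<Omega> g F (ulow u)"
proof -
  have lstar_ulow: "lstar (ulow u) = ulow u"
    using lstar_lower_semicont[OF lower_semicont_ulow[of u C, OF solutions_bounded]] by blast
  have "ulow u \<in> Xbar"
    using abs_ulow_le[of u C, OF solutions_bounded] unfolding Xbar_def bounded_iff by auto
  moreover have "(x \<in> \<Omega> \<longrightarrow> 0 \<le> Fupper \<Omega> F x (ulow u x) (grad \<phi> x) (hess \<phi> x)) \<and>
    (x \<in> frontier \<Omega> \<longrightarrow>
       0 \<le> max (ereal (ulow u x - lstar g x)) (Fupper \<Omega> F x (ulow u x) (grad \<phi> x) (hess \<phi> x)))"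
    if \<phi>: "\<phi> \<in> Cb_inf" and x: "x \<in> closure \<Omega>"
      and min: "\<forall>y\<in>closure \<Omega>. ulow u x - \<phi> x \<le> ulow u y - \<phi> y" for \<phi> x
  proof -
    note inequality = ulow_viscosity_inequality[OF \<phi> x min[rule_format]]
    consider (interior) "x \<in> \<Omega>" | (above_g) "x \<notin> \<Omega>" "lstar g x \<le> ulow u x"
      | (below_g) "ulow u x < lstar g x"
      by fastforce
    then show ?thesis
    proof cases
      case interior
      then obtain R where "0 < R" "ball x R \<subseteq> \<Omega>"
        using open_domain open_contains_ball by blast
      then show ?thesis by (intro inequality) blast+
    next
      case above_g
      then show ?thesis by (simp add: le_max_iff_disj)
    next
      case below_g
      then obtain R where "0 < R" "\<forall>w\<in>ball x R. \<phi> w + (ulow u x - \<phi> x) \<le> g w"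
        using above_on_ball_if_less_lstar[OF boundary_data_bounded Cb_inf_isCont[OF \<phi>, of x],
            where c = "ulow u x - \<phi> x"] by auto
      then show ?thesis by (intro inequality) blast+
    qed
  qed
  ultimately show ?thesis unfolding visc_supersol_def lstar_ulow by blast
qed

end

theorem mainTheorem3:
  fixes \<Omega> :: "(real ^ 'n::finite) set"
    and X :: "(real ^ 'n \<Rightarrow> real) set"
    and g :: "real ^ 'n \<Rightarrow> real"
    and A :: "real \<Rightarrow> real ^ 'n \<Rightarrow> (real ^ 'n \<Rightarrow> real) \<Rightarrow> real \<Rightarrow> real"
    and F :: "real ^ 'n \<Rightarrow> real \<Rightarrow> real ^ 'n \<Rightarrow> real ^ 'n ^ 'n \<Rightarrow> real"
    and u :: "real \<Rightarrow> real ^ 'n \<Rightarrow> real"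
  assumes \<Omega>_open: "open \<Omega>" and \<Omega>_conn: "connected \<Omega>"
    and X_sub: "X \<subseteq> Xbar" and Cb_sub: "Cb_inf \<subseteq> X"
    and g_bdd: "g \<in> Xbar"
    and F_proper: "\<And>x s1 s2 p M. x \<in> \<Omega> \<Longrightarrow> M \<in> sym_mats \<Longrightarrow> s1 \<le> s2 \<Longrightarrow> F x s1 p M \<le> F x s2 p M"
    and F_elliptic: "\<And>x s p M1 M2. x \<in> \<Omega> \<Longrightarrow> M1 \<in> sym_mats \<Longrightarrow> M2 \<in> sym_mats \<Longrightarrow>
                       mat_le M1 M2 \<Longrightarrow> F x s p M2 \<le> F x s p M1"
    and A_a: "\<And>\<rho> x \<phi>1 \<phi>2 s. 0 < \<rho> \<Longrightarrow> x \<in> \<Omega> \<Longrightarrow> \<phi>1 \<in> X \<Longrightarrow> \<phi>2 \<in> X \<Longrightarrow>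
                 (\<forall>y. \<phi>1 y \<le> \<phi>2 y) \<Longrightarrow> A \<rho> x \<phi>2 s \<le> A \<rho> x \<phi>1 s"
    and A_b: "\<And>\<rho> x \<phi> s1 s2. 0 < \<rho> \<Longrightarrow> x \<in> \<Omega> \<Longrightarrow> \<phi> \<in> X \<Longrightarrow>
                 s1 \<le> s2 \<Longrightarrow> A \<rho> x \<phi> s1 \<le> A \<rho> x \<phi> s2"
    and A_c: "\<And>\<rho> x \<phi>. 0 < \<rho> \<Longrightarrow> x \<in> \<Omega> \<Longrightarrow> \<phi> \<in> X \<Longrightarrow> \<exists>!s. A \<rho> x \<phi> s = 0"
    and cons: "consistent \<Omega> g A F"
    and u_sol: "\<And>\<rho>. 0 < \<rho> \<Longrightarrow> dpp_sol \<Omega> X g A \<rho> (u \<rho>)"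
    and u_bdd: "\<exists>C. \<forall>\<rho>>0. \<forall>x. \<bar>u \<rho> x\<bar> \<le> C"
  shows "upper_semicont (ubar u) \<and> visc_subsol \<Omega> g F (ubar u)
       \<and> lower_semicont (ulow u) \<and> visc_supersol \<Omega> g F (ulow u)"
proof -
  obtain C where "\<forall>\<rho>>0. \<forall>x. \<bar>u \<rho> x\<bar> \<le> C" using u_bdd by blast
  then interpret monotone_consistent_scheme \<Omega> X g A F u C
    using \<Omega>_open Cb_sub g_bdd A_b cons u_sol by unfold_locales auto
  show ?thesis
    using upper_semicont_ubar[of u C, OF solutions_bounded]
      lower_semicont_ulow[of u C, OF solutions_bounded] visc_subsol_ubar visc_supersol_ulow
    by blast
qed

end
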